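(* Let $\mathbb{H}_3$ be the discrete Heisenberg group generated by $a,b,c$ with relations $ba=abc$, $ca=ac$, $cb=bc$, and write each element uniquely as $x=(x_1,x_2,x_3)=a^{x_1}b^{x_2}c^{x_3}$, so that $xy=(x_1+y_1,\,x_2+y_2,\,x_3+y_3+x_2y_1)$. With integer coefficients and the bar resolution: (i) $H^1(\mathbb{H}_3)$ is generated by $\alpha_1(x)=x_1$, $\alpha_2(x)=x_2$. (ii) $H^2(\mathbb{H}_3)$ is generated by the classes of the $2$-cocycles $\beta_1(x,y)=x_3y_1+\frac12x_2y_1(y_1-1)$ and $\beta_2(x,y)=(x_1x_2-x_3)y_2+\frac12x_1y_2(y_2-1)$. (iii) $H^3(\mathbb{H}_3)$ is generated by the class of $\gamma(x,y,z)=\big(x_3y_1+\frac12x_2y_1(y_1-1)\big)z_2$. (iv) In the cohomology ring, $[\alpha_1]\smile[\alpha_2]=0$ and $[\beta_i]\smile[\alpha_j]=(1-\delta_{ij})[\gamma]$ for $i,j\in\{1,2\}$. (v) $H_1(\mathbb{H}_3)$ is generated by $A_1=[a]$, $A_2=[b]$; $H_2(\mathbb{H}_3)$ is generated by $B_1=[c|a]-[a|c]$ and $B_2=[b|c]-[c|b]$; and $H_3(\mathbb{H}_3)$ is generated by $C=[c^{-1}|bc|ab^{-1}c^{-1}]+[bc|ab^{-1}c^{-1}|a^{-1}bc^{-1}]+[ab^{-1}c^{-1}|a^{-1}bc^{-1}|ac]+[a^{-1}bc^{-1}|ac|c^{-1}]-[ac|a^{-1}bc^{-1}|ab^{-1}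c^{-1}]-[a^{-1}bc^{-1}|ab^{-1}c^{-1}|bc]$.
   Context: Homology and cohomology of a group $\Gamma$ with trivial coefficients $\mathbb{Z}$ are computed by the inhomogeneous bar complex: $n$-chains are formal $\mathbb{Z}$-combinations of symbols $[g_1|\dots|g_n]$, with $\partial[g]=0$, $\partial[g|h]=[g]-[gh]+[h]$, $\partial[g|h|k]=[h|k]-[gh|k]+[g|hk]-[g|h]$; $n$-cochains are functions $\Gamma^n\to\mathbb{Z}$ with the dual coboundary. The cup product of cochains is $(\phi\smile\psi)(g_1,\dots,g_{p+q})=\phi(g_1,\dots,g_p)\psi(g_{p+1},\dots,g_{p+q})$. $\delta_{ij}$ is the Kronecker delta. *)

theory Defs
  imports Main
begin

type_synonym heis = "int \<times> int \<times> int"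

definition h1 :: "heis \<Rightarrow> int" where "h1 x = fst x"
definition h2 :: "heis \<Rightarrow> int" where "h2 x = fst (snd x)"
definition h3 :: "heis \<Rightarrow> int" where "h3 x = snd (snd x)"

definition hmul :: "heis \<Rightarrow> heis \<Rightarrow> heis" where
  "hmul x y = (h1 x + h1 y, h2 x + h2 y, h3 x + h3 y + h2 x * h1 y)"

text \<open>n-chains: finitely supported functions from lists of length n to int
  (formal Z-combinations of symbols [g1|...|gn]); n-cochains: functions on lists of length n.\<close>

definition face :: "('g \<Rightarrow> 'g \<Rightarrow> 'g) \<Rightarrow> nat \<Rightarrow> 'g list \<Rightarrow> 'g list" where
  "face m i xs = (if i = 0 then tl xs
                  else if length xs \<le> i then butlast xs
                  else take (i - 1) xs @ [m (xs ! (i - 1)) (xs ! i)] @ drop (i + 1) xs)"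

definition cobd :: "('g \<Rightarrow> 'g \<Rightarrow> 'g) \<Rightarrow> ('g list \<Rightarrow> int) \<Rightarrow> 'g list \<Rightarrow> int" where
  "cobd m \<phi> xs = (\<Sum>i\<le>length xs. (-1) ^ i * \<phi> (face m i xs))"

definition is_chain :: "nat \<Rightarrow> ('g list \<Rightarrow> int) \<Rightarrow> bool" where
  "is_chain n c \<longleftrightarrow> finite {xs. c xs \<noteq> 0} \<and> (\<forall>xs. c xs \<noteq> 0 \<longrightarrow> length xs = n)"

definition bnd :: "('g \<Rightarrow> 'g \<Rightarrow> 'g) \<Rightarrow> ('g list \<Rightarrow> int) \<Rightarrow> 'g list \<Rightarrow> int" where
  "bnd m c ys = (\<Sum>xs\<in>{xs. c xs \<noteq> 0}. \<Sum>i\<le>length xs.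
                    if face m i xs = ys then (-1) ^ i * c xs else 0)"

definition gen :: "'g list \<Rightarrow> 'g list \<Rightarrow> int" where
  "gen xs ys = (if ys = xs then 1 else 0)"

definition cup :: "nat \<Rightarrow> ('g list \<Rightarrow> int) \<Rightarrow> ('g list \<Rightarrow> int) \<Rightarrow> 'g list \<Rightarrow> int" where
  "cup p \<phi> \<psi> xs = \<phi> (take p xs) * \<psi> (drop p xs)"

definition cocycle :: "nat \<Rightarrow> (heis list \<Rightarrow> int) \<Rightarrow> bool" where
  "cocycle n \<phi> \<longleftrightarrow> (\<forall>xs. length xs = n + 1 \<longrightarrow> cobd hmul \<phi> xs = 0)"

definition cohomologous :: "nat \<Rightarrow> (heis list \<Rightarrow> int) \<Rightarrow> (heis list \<Rightarrow> int) \<Rightarrow> bool" where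
  "cohomologous n \<phi> \<psi> \<longleftrightarrow> (\<exists>\<theta>. \<forall>xs. length xs = n \<longrightarrow> \<phi> xs - \<psi> xs = cobd hmul \<theta> xs)"

definition cycle :: "nat \<Rightarrow> (heis list \<Rightarrow> int) \<Rightarrow> bool" where
  "cycle n z \<longleftrightarrow> is_chain n z \<and> (\<forall>ys. bnd hmul z ys = 0)"

definition homologous :: "nat \<Rightarrow> (heis list \<Rightarrow> int) \<Rightarrow> (heis list \<Rightarrow> int) \<Rightarrow> bool" where
  "homologous n z w \<longleftrightarrow> (\<exists>u. is_chain (Suc n) u \<and> (\<forall>ys. z ys - w ys = bnd hmul u ys))"

definition alpha :: "nat \<Rightarrow> heis list \<Rightarrow> int" where
  "alpha i xs = (if i = 1 then h1 (xs ! 0) else h2 (xs ! 0))"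

definition beta :: "nat \<Rightarrow> heis list \<Rightarrow> int" where
  "beta i xs = (let x = xs ! 0; y = xs ! 1 in
     if i = 1 then h3 x * h1 y + h2 x * ((h1 y * (h1 y - 1)) div 2)
     else (h1 x * h2 x - h3 x) * h2 y + h1 x * ((h2 y * (h2 y - 1)) div 2))"

definition gamma :: "heis list \<Rightarrow> int" where
  "gamma xs = (let x = xs ! 0; y = xs ! 1; z = xs ! 2 in
     (h3 x * h1 y + h2 x * ((h1 y * (h1 y - 1)) div 2)) * h2 z)"

definition ga :: heis where "ga = (1, 0, 0)"
definition gb :: heis where "gb = (0, 1, 0)"
definition gc :: heis where "gc = (0, 0, 1)"

definition A :: "nat \<Rightarrow> heis list \<Rightarrow> int" where
  "A i = (if i = 1 then gen [ga] else gen [gb])"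

definition B :: "nat \<Rightarrow> heis list \<Rightarrow> int" where
  "B i = (if i = 1 then (\<lambda>ys. gen [gc, ga] ys - gen [ga, gc] ys)
          else (\<lambda>ys. gen [gb, gc] ys - gen [gc, gb] ys))"

text \<open>c^-1 = (0,0,-1), bc = (0,1,1), ab^-1c^-1 = (1,-1,-1), a^-1bc^-1 = (-1,1,-1), ac = (1,0,1).\<close>
definition C :: "heis list \<Rightarrow> int" where
  "C ys = gen [(0,0,-1), (0,1,1), (1,-1,-1)] ys
        + gen [(0,1,1), (1,-1,-1), (-1,1,-1)] ys
        + gen [(1,-1,-1), (-1,1,-1), (1,0,1)] ys
        + gen [(-1,1,-1), (1,0,1), (0,0,-1)] ys
        - gen [(1,0,1), (-1,1,-1), (1,-1,-1)] ys
        - gen [(-1,1,-1), (1,-1,-1), (0,1,1)] ys"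

end

theory Submission
  imports Defs "HOL-Library.Poly_Mapping"
begin

text \<open>The cellular chains of the universal cover of the Heisenberg nilmanifold form a free
  \<open>\<int>[H\<^sub>3]\<close>-resolution of \<open>\<int>\<close> with one generator for each face of the unit cube, and it has an
  explicit contracting homotopy. Chain maps between this resolution and the bar resolution, and a
  homotopy from the identity of the bar resolution to their composite, are built from the two
  contracting homotopies. On coinvariants, every bar cycle of degree at most 3 becomes homologous
  to the image of a cellular cycle. With trivial coefficients the only nonzero cellular differential
  is \<open>Eab \<mapsto> -Ec\<close>, so cellular homology is spanned by \<open>Ea, Eb\<close>, by \<open>Eac, Ebc\<close> and by \<open>Eabc\<close>,
  whose images are homologous to \<open>A\<^sub>1, A\<^sub>2\<close>, to \<open>-B\<^sub>1, B\<^sub>2\<close> and to \<open>\<plusminus>C\<close>; the coefficients are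
  read off by evaluating \<open>\<alpha>, \<beta>, \<gamma>\<close>. Cohomology follows, since a cocycle is determined up to
  a coboundary by its values on these homology generators.\<close>

lemma frag_extend_frag_extend:
  "frag_extend f (frag_extend g x) = frag_extend (\<lambda>k. frag_extend f (g k)) x"
  using subset_UNIV by (induction x rule: frag_induction) (auto simp: frag_extend_diff)

lemma frag_extend_frag_of [simp]: "frag_extend frag_of x = x"
  by (metis frag_expansion)

lemma frag_extend_add_fun: "frag_extend (\<lambda>k. f k + g k) x = frag_extend f x + frag_extend g x"
  using subset_UNIV by (induction x rule: frag_induction) (auto simp: frag_extend_diff algebra_simps)

lemma frag_extend_diff_fun: "frag_extend (\<lambda>k. f k - g k) x = frag_extend f x - frag_extend g x"
  using subset_UNIV by (induction x rule: frag_induction) (auto simp: frag_extend_diff algebra_simps)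

lemma frag_extend_finite_support:
  assumes "Poly_Mapping.keys x \<subseteq> X" and "finite X"
  shows "frag_extend f x = (\<Sum>a\<in>X. frag_cmul (Poly_Mapping.lookup x a) (f a))"
  unfolding frag_extend_def using assms by (intro sum.mono_neutral_left) (auto simp: in_keys_iff)

lemma frag_cmul_minus_right: "frag_cmul c (- x) = frag_cmul (- c) x"
  by (rule poly_mapping_eqI) simp

lemma frag_cmul_diff_right: "frag_cmul c (x - y) = frag_cmul c x - frag_cmul c y"
  by (rule poly_mapping_eqI) (simp add: lookup_minus algebra_simps)

lemma keys_frag_extend_subset:
  "(\<And>k. k \<in> Poly_Mapping.keys x \<Longrightarrow> Poly_Mapping.keys (F k) \<subseteq> X) \<Longrightarrow>
   Poly_Mapping.keys (frag_extend F x) \<subseteq> X"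
  using keys_frag_extend[of F x] by blast

lemma keys_add_subset:
  "Poly_Mapping.keys x \<subseteq> X \<Longrightarrow> Poly_Mapping.keys y \<subseteq> X \<Longrightarrow> Poly_Mapping.keys (x + y) \<subseteq> X"
  using keys_add[of x y] by blast

lemma keys_diff_subset:
  "Poly_Mapping.keys x \<subseteq> X \<Longrightarrow> Poly_Mapping.keys y \<subseteq> X \<Longrightarrow> Poly_Mapping.keys (x - y) \<subseteq> X"
  using keys_diff[of x y] by blast

lemma keys_cmul_subset: "Poly_Mapping.keys x \<subseteq> X \<Longrightarrow> Poly_Mapping.keys (frag_cmul c x) \<subseteq> X"
  using keys_cmul[of c x] by blast

definition frag_eval :: "('a \<Rightarrow> int) \<Rightarrow> ('a \<Rightarrow>\<^sub>0 int) \<Rightarrow> int" where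
  "frag_eval \<phi> x = (\<Sum>k\<in>Poly_Mapping.keys x. Poly_Mapping.lookup x k * \<phi> k)"

lemma frag_eval_eq_lookup_frag_extend:
  "frag_eval \<phi> x = Poly_Mapping.lookup (frag_extend (\<lambda>k. frag_cmul (\<phi> k) (frag_of ())) x) ()"
  unfolding frag_eval_def frag_extend_def by (simp add: lookup_sum)

lemma frag_eval_of [simp]: "frag_eval \<phi> (frag_of k) = \<phi> k"
  by (simp add: frag_eval_def)

lemma frag_eval_add [simp]: "frag_eval \<phi> (x + y) = frag_eval \<phi> x + frag_eval \<phi> y"
  by (simp add: frag_eval_eq_lookup_frag_extend frag_extend_add lookup_add)

lemma frag_eval_diff [simp]: "frag_eval \<phi> (x - y) = frag_eval \<phi> x - frag_eval \<phi> y"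
  by (simp add: frag_eval_eq_lookup_frag_extend frag_extend_diff lookup_minus)

lemma frag_eval_minus [simp]: "frag_eval \<phi> (- x) = - frag_eval \<phi> x"
  by (simp add: frag_eval_eq_lookup_frag_extend frag_extend_minus)

lemma frag_eval_zero [simp]: "frag_eval \<phi> 0 = 0"
  by (simp add: frag_eval_def)

lemma frag_eval_cmul [simp]: "frag_eval \<phi> (frag_cmul c x) = c * frag_eval \<phi> x"
  by (simp add: frag_eval_eq_lookup_frag_extend frag_extend_cmul)

lemma frag_eval_sum: "frag_eval \<phi> (sum f I) = (\<Sum>i\<in>I. frag_eval \<phi> (f i))"
  by (induction I rule: infinite_finite_induct) auto

lemma frag_eval_cong:
  "(\<And>k. k \<in> Poly_Mapping.keys x \<Longrightarrow> \<phi> k = \<psi> k) \<Longrightarrow> frag_eval \<phi> x = frag_eval \<psi> x"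
  unfolding frag_eval_def by simp

lemma frag_eval_zero_fun [simp]: "frag_eval (\<lambda>k. 0) x = 0"
  unfolding frag_eval_def by simp

lemma frag_eval_frag_extend: "frag_eval \<phi> (frag_extend F x) = frag_eval (\<lambda>k. frag_eval \<phi> (F k)) x"
proof -
  have unit: "(y :: unit \<Rightarrow>\<^sub>0 int) = frag_cmul (Poly_Mapping.lookup y ()) (frag_of ())" for y
    by (rule poly_mapping_eqI) simp
  have "frag_extend (\<lambda>k. frag_cmul (\<phi> k) (frag_of ())) (frag_extend F x)
      = frag_extend (\<lambda>k. frag_extend (\<lambda>k. frag_cmul (\<phi> k) (frag_of ())) (F k)) x"
    by (rule frag_extend_frag_extend)
  also have "\<dots> = frag_extend (\<lambda>k. frag_cmul (frag_eval \<phi> (F k)) (frag_of ())) x"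
    unfolding frag_eval_eq_lookup_frag_extend by (subst unit) simp
  finally show ?thesis unfolding frag_eval_eq_lookup_frag_extend by simp
qed

definition signed_sum :: "int \<Rightarrow> (int \<Rightarrow> 'a::ab_group_add) \<Rightarrow> 'a" where
  "signed_sum k f = (if 0 \<le> k then (\<Sum>l\<in>{0..<k}. f l) else - (\<Sum>l\<in>{k..<0}. f l))"

lemma signed_sum_0 [simp]: "signed_sum 0 f = 0"
  by (simp add: signed_sum_def)

lemma signed_sum_zero [simp]: "signed_sum k (\<lambda>l. 0) = 0"
  by (simp add: signed_sum_def)

lemma signed_sum_plus1: "signed_sum (k + 1) f = signed_sum k f + f k"
proof (cases "0 \<le> k")
  case True
  then have "{0..<k + 1} = insert k {0..<k}" by auto
  then show ?thesis using True by (simp add: signed_sum_def add.commute)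
next
  case False
  show ?thesis
  proof (cases "k = -1")
    case True
    then have "{k..<0} = {-1}" by auto
    then show ?thesis using True by (simp add: signed_sum_def)
  next
    case False
    then have "{k..<0} = insert k {k + 1..<0}" using \<open>\<not> 0 \<le> k\<close> by auto
    then show ?thesis using \<open>\<not> 0 \<le> k\<close> False by (simp add: signed_sum_def)
  qed
qed

lemma eq_of_same_increments:
  fixes L R :: "int \<Rightarrow> 'a::ab_group_add"
  assumes "\<And>k. L (k + 1) - L k = R (k + 1) - R k" and "L 0 = R 0"
  shows "L k = R k"
proof (induction k rule: int_induct[where k = 0])
  case base
  show ?case using assms(2) .
next
  case (step1 i)
  then show ?case using assms(1)[of i] by simp
next
  case (step2 i)
  then show ?case using assms(1)[of "i - 1"] by simp
qed

lemma frag_eval_signed_sum: "frag_eval \<phi> (signed_sum k f) = signed_sum k (\<lambda>l. frag_eval \<phi> (f l))"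
  by (rule eq_of_same_increments[where L = "\<lambda>k. frag_eval \<phi> (signed_sum k f)"])
     (simp_all add: signed_sum_plus1)

lemma keys_signed_sum:
  assumes "\<And>l. Poly_Mapping.keys (f l) \<subseteq> X"
  shows "Poly_Mapping.keys (signed_sum k f) \<subseteq> X"
proof -
  have "Poly_Mapping.keys (sum f I) \<subseteq> X" for I
    using keys_sum[of f I] assms by blast
  then show ?thesis unfolding signed_sum_def by auto
qed

lemma hmul_eq [simp]: "hmul (x1, x2, x3) (y1, y2, y3) = (x1 + y1, x2 + y2, x3 + y3 + x2 * y1)"
  by (simp add: hmul_def h1_def h2_def h3_def)

lemma h_hmul [simp]:
  "h1 (hmul x y) = h1 x + h1 y" "h2 (hmul x y) = h2 x + h2 y" "h3 (hmul x y) = h3 x + h3 y + h2 x * h1 y"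
  by (simp_all add: hmul_def h1_def h2_def h3_def)

definition hunit :: heis where "hunit = (0, 0, 0)"

lemma hmul_assoc: "hmul (hmul x y) z = hmul x (hmul y z)"
  by (cases x; cases y; cases z) (simp add: algebra_simps)

lemma hmul_hunit [simp]: "hmul hunit x = x" "hmul x hunit = x"
  by (cases x; simp add: hunit_def)+

definition choose2 :: "int \<Rightarrow> int" where
  "choose2 m = m * (m - 1) div 2"

lemma two_mult_choose2: "2 * choose2 m = m * (m - 1)"
proof -
  have "even (m * (m - 1))" by auto
  then show ?thesis unfolding choose2_def by simp
qed

lemma choose2_add: "choose2 (m + n) = choose2 m + choose2 n + m * n"
proof -
  have "2 * choose2 (m + n) = 2 * (choose2 m + choose2 n + m * n)"
    unfolding distrib_left two_mult_choose2 by (simp add: algebra_simps)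
  then show ?thesis by simp
qed

lemma beta1_Cons: "beta 1 (x # y # r) = h3 x * h1 y + h2 x * choose2 (h1 y)"
  by (simp add: beta_def choose2_def)

lemma beta2_Cons: "beta 2 (x # y # r) = (h1 x * h2 x - h3 x) * h2 y + h1 x * choose2 (h2 y)"
  by (simp add: beta_def choose2_def)

lemma gamma_Cons: "gamma (x # y # z # r) = (h3 x * h1 y + h2 x * choose2 (h1 y)) * h2 z"
  by (simp add: gamma_def choose2_def)

lemma cobd_pair: "cobd m \<phi> [x, y] = \<phi> [y] - \<phi> [m x y] + \<phi> [x]"
  by (simp add: cobd_def face_def eval_nat_numeral)

lemma cobd_triple:
  "cobd m \<phi> [x, y, z] = \<phi> [y, z] - \<phi> [m x y, z] + \<phi> [x, m y z] - \<phi> [x, y]"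
  by (simp add: cobd_def face_def eval_nat_numeral)

lemma cobd_quadruple:
  "cobd m \<phi> [w, x, y, z] = \<phi> [x, y, z] - \<phi> [m w x, y, z] + \<phi> [w, m x y, z]
     - \<phi> [w, x, m y z] + \<phi> [w, x, y]"
  by (simp add: cobd_def face_def eval_nat_numeral)

lemma length_2_cases:
  assumes "length xs = 2"
  obtains x y where "xs = [x, y]"
  using assms by (auto simp: length_Suc_conv eval_nat_numeral simp del: split_paired_Ex split_paired_All)

lemma length_3_cases:
  assumes "length xs = 3"
  obtains x y z where "xs = [x, y, z]"
  using assms by (auto simp: length_Suc_conv eval_nat_numeral simp del: split_paired_Ex split_paired_All)

lemma length_4_cases:
  assumes "length xs = 4"
  obtains w x y z where "xs = [w, x, y, z]"
  using assms by (auto simp: length_Suc_conv eval_nat_numeral simp del: split_paired_Ex split_paired_All)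

lemma alpha_cocycle: "cocycle 1 (alpha i)"
  unfolding cocycle_def
proof (intro allI impI)
  fix xs :: "heis list"
  assume "length xs = 1 + 1"
  then have "length xs = 2" by simp
  then obtain x y where "xs = [x, y]" by (rule length_2_cases)
  then show "cobd hmul (alpha i) xs = 0" by (simp add: cobd_pair alpha_def)
qed

lemma beta_cocycle:
  assumes "i \<in> {1, 2}"
  shows "cocycle 2 (beta i)"
  unfolding cocycle_def
proof (intro allI impI)
  fix xs :: "heis list"
  assume "length xs = 2 + 1"
  then have "length xs = 3" by simp
  then obtain x y z where xs: "xs = [x, y, z]" by (rule length_3_cases)
  show "cobd hmul (beta i) xs = 0"
  proof (cases "i = 1")
    case True
    show ?thesis unfolding xs True cobd_triple beta1_Cons h_hmul choose2_add by algebra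
  next
    case False
    with assms have "i = 2" by auto
    show ?thesis unfolding xs \<open>i = 2\<close> cobd_triple beta2_Cons h_hmul choose2_add by algebra
  qed
qed

lemma gamma_cocycle: "cocycle 3 gamma"
  unfolding cocycle_def
proof (intro allI impI)
  fix xs :: "heis list"
  assume "length xs = 3 + 1"
  then have "length xs = 4" by simp
  then obtain w x y z where xs: "xs = [w, x, y, z]" by (rule length_4_cases)
  show "cobd hmul gamma xs = 0"
    unfolding xs cobd_quadruple gamma_Cons h_hmul choose2_add by algebra
qed

lemma cobd_cup_2_1:
  "cobd m (cup 2 \<phi> \<psi>) [w, x, y, z] = cobd m \<phi> [w, x, y] * \<psi> [z] + \<phi> [w, x] * cobd m \<psi> [y, z]"
  by (simp add: cobd_quadruple cobd_triple cobd_pair cup_def eval_nat_numeral algebra_simps)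

lemma cocycle_cup_2_1:
  assumes "cocycle 2 \<phi>" and "cocycle 1 \<psi>"
  shows "cocycle 3 (cup 2 \<phi> \<psi>)"
  unfolding cocycle_def
proof (intro allI impI)
  fix xs :: "heis list"
  assume "length xs = 3 + 1"
  then have "length xs = 4" by simp
  then obtain w x y z where "xs = [w, x, y, z]" by (rule length_4_cases)
  with assms show "cobd hmul (cup 2 \<phi> \<psi>) xs = 0"
    by (simp add: cobd_cup_2_1 cocycle_def)
qed

section \<open>A free resolution of \<open>\<int>\<close> by cells of the Heisenberg nilmanifold\<close>

text \<open>A basis element \<open>(g, S)\<close> is the translate by \<open>g\<close> of the face of the unit cube spanned by the
  generators in \<open>S\<close>; the edge \<open>(g, Es)\<close> runs from \<open>g\<close> to \<open>g s\<close>. The boundary of the square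
  \<open>(g, Eab)\<close> is the loop through \<open>g, g b, g b a = g a b c, g a b, g a\<close>.\<close>

datatype cell = E0 | Ea | Eb | Ec | Eab | Eac | Ebc | Eabc

fun cell_dim :: "cell \<Rightarrow> nat" where
  "cell_dim E0 = 0" | "cell_dim Ea = 1" | "cell_dim Eb = 1" | "cell_dim Ec = 1"
| "cell_dim Eab = 2" | "cell_dim Eac = 2" | "cell_dim Ebc = 2" | "cell_dim Eabc = 3"

abbreviation gcell :: "heis \<Rightarrow> cell \<Rightarrow> (heis \<times> cell) \<Rightarrow>\<^sub>0 int" where
  "gcell g S \<equiv> frag_of (g, S)"

fun cell_bd :: "heis \<times> cell \<Rightarrow> (heis \<times> cell) \<Rightarrow>\<^sub>0 int" where
  "cell_bd ((i,j,k), E0) = 0"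
| "cell_bd ((i,j,k), Ea) = gcell (i+1,j,k+j) E0 - gcell (i,j,k) E0"
| "cell_bd ((i,j,k), Eb) = gcell (i,j+1,k) E0 - gcell (i,j,k) E0"
| "cell_bd ((i,j,k), Ec) = gcell (i,j,k+1) E0 - gcell (i,j,k) E0"
| "cell_bd ((i,j,k), Eab) = gcell (i,j+1,k) Ea - gcell (i,j,k) Ea - gcell (i+1,j,k+j) Eb
                           + gcell (i,j,k) Eb - gcell (i+1,j+1,k+j) Ec"
| "cell_bd ((i,j,k), Eac) = gcell (i+1,j,k+j) Ec - gcell (i,j,k) Ec - gcell (i,j,k+1) Ea + gcell (i,j,k) Ea"
| "cell_bd ((i,j,k), Ebc) = gcell (i,j+1,k) Ec - gcell (i,j,k) Ec - gcell (i,j,k+1) Eb + gcell (i,j,k) Eb"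
| "cell_bd ((i,j,k), Eabc) = gcell (i,j,k+1) Eab - gcell (i,j,k) Eab + gcell (i,j+1,k) Eac
                            - gcell (i,j,k) Eac - gcell (i+1,j,k+j) Ebc + gcell (i,j,k) Ebc"

lemma cell_bd_E0 [simp]: "cell_bd (g, E0) = 0"
  by (cases g) simp

abbreviation dP :: "((heis \<times> cell) \<Rightarrow>\<^sub>0 int) \<Rightarrow> (heis \<times> cell) \<Rightarrow>\<^sub>0 int" where
  "dP \<equiv> frag_extend cell_bd"

lemma keys_cell_bd: "Poly_Mapping.keys (cell_bd (g, S)) \<subseteq> {x. cell_dim (snd x) = cell_dim S - 1}"
proof -
  obtain i j k where g: "g = (i, j, k)" by (metis prod_cases3)
  show ?thesis unfolding g
    by (cases S) (simp_all, (intro keys_diff_subset order_trans[OF keys_add] Un_least; simp)+)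
qed

definition actP :: "heis \<Rightarrow> ((heis \<times> cell) \<Rightarrow>\<^sub>0 int) \<Rightarrow> (heis \<times> cell) \<Rightarrow>\<^sub>0 int" where
  "actP h = frag_extend (\<lambda>x. gcell (hmul h (fst x)) (snd x))"

lemma actP_of [simp]: "actP h (gcell g S) = gcell (hmul h g) S"
  by (simp add: actP_def)
lemma actP_add [simp]: "actP h (x + y) = actP h x + actP h y"
  by (simp add: actP_def frag_extend_add)
lemma actP_diff [simp]: "actP h (x - y) = actP h x - actP h y"
  by (simp add: actP_def frag_extend_diff)
lemma actP_zero [simp]: "actP h 0 = 0"
  by (simp add: actP_def)

lemma keys_actP: "Poly_Mapping.keys (actP h y) \<subseteq> (\<lambda>x. (hmul h (fst x), snd x)) ` Poly_Mapping.keys y"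
  unfolding actP_def by (rule keys_frag_extend_subset) auto

lemma actP_actP: "actP h (actP h' y) = actP (hmul h h') y"
  unfolding actP_def by (simp add: frag_extend_frag_extend hmul_assoc)

lemma cell_bd_hmul: "cell_bd (hmul h g, S) = actP h (cell_bd (g, S))"
proof -
  obtain i j k where g: "g = (i, j, k)" by (metis prod_cases3)
  obtain a b c where h: "h = (a, b, c)" by (metis prod_cases3)
  show ?thesis unfolding g h
    by (cases S; simp only: hmul_eq cell_bd.simps actP_add actP_diff actP_of actP_zero;
        simp add: algebra_simps)
qed

lemma dP_actP: "dP (actP h y) = actP h (dP y)"
  unfolding actP_def by (simp add: frag_extend_frag_extend cell_bd_hmul[unfolded actP_def])

lemma dP_cell_bd: "dP (cell_bd x) = 0"
proof -
  obtain i j k S where x: "x = ((i, j, k), S)" by (metis prod_cases3 prod.collapse)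
  show ?thesis unfolding x
    by (cases S; simp add: frag_extend_add frag_extend_diff algebra_simps)
qed

text \<open>On vertices the contracting homotopy is the staircase path
  \<open>1 \<rightarrow> a\<^sup>i \<rightarrow> a\<^sup>i b\<^sup>j \<rightarrow> a\<^sup>i b\<^sup>j c\<^sup>k\<close>; on higher cells it sweeps out these paths.\<close>

definition c_line :: "cell \<Rightarrow> int \<Rightarrow> int \<Rightarrow> int \<Rightarrow> (heis \<times> cell) \<Rightarrow>\<^sub>0 int" where
  "c_line S i j k = signed_sum k (\<lambda>l. gcell (i, j, l) S)"

definition a_path :: "int \<Rightarrow> (heis \<times> cell) \<Rightarrow>\<^sub>0 int" where
  "a_path i = signed_sum i (\<lambda>l. gcell (l, 0, 0) Ea)"

definition b_path :: "int \<Rightarrow> int \<Rightarrow> (heis \<times> cell) \<Rightarrow>\<^sub>0 int" where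
  "b_path i j = signed_sum j (\<lambda>l. gcell (i, l, 0) Eb)"

definition ab_sheet :: "int \<Rightarrow> int \<Rightarrow> (heis \<times> cell) \<Rightarrow>\<^sub>0 int" where
  "ab_sheet i j = signed_sum j (\<lambda>l. gcell (i, l, 0) Eab - c_line Ebc (i + 1) l l)"

lemma c_line_plus1: "c_line S i j (k + 1) = c_line S i j k + gcell (i, j, k) S"
  by (simp add: c_line_def signed_sum_plus1)
lemma a_path_plus1: "a_path (i + 1) = a_path i + gcell (i, 0, 0) Ea"
  by (simp add: a_path_def signed_sum_plus1)
lemma b_path_plus1: "b_path i (j + 1) = b_path i j + gcell (i, j, 0) Eb"
  by (simp add: b_path_def signed_sum_plus1)
lemma c_line_plus1_shift: "c_line S i j (k + 1 + m) = c_line S i j (k + m) + gcell (i, j, k + m) S"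
  using c_line_plus1[of S i j "k + m"] by (simp add: algebra_simps)
lemma ab_sheet_plus1: "ab_sheet i (j + 1) = ab_sheet i j + gcell (i, j, 0) Eab - c_line Ebc (i + 1) j j"
  by (simp add: ab_sheet_def signed_sum_plus1)

lemma contr_pieces_0 [simp]: "c_line S i j 0 = 0" "a_path 0 = 0" "b_path i 0 = 0" "ab_sheet i 0 = 0"
  by (simp_all add: c_line_def a_path_def b_path_def ab_sheet_def)

lemma dP_a_path: "dP (a_path i) = gcell (i, 0, 0) E0 - gcell (0, 0, 0) E0"
  by (rule eq_of_same_increments[where L = "\<lambda>i. dP (a_path i)"])
     (simp_all add: a_path_plus1 frag_extend_add)

lemma dP_b_path: "dP (b_path i j) = gcell (i, j, 0) E0 - gcell (i, 0, 0) E0"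
  by (rule eq_of_same_increments[where L = "\<lambda>j. dP (b_path i j)"])
     (simp_all add: b_path_plus1 frag_extend_add)

lemma dP_c_line_Ec: "dP (c_line Ec i j k) = gcell (i, j, k) E0 - gcell (i, j, 0) E0"
  by (rule eq_of_same_increments[where L = "\<lambda>k. dP (c_line Ec i j k)"])
     (simp_all add: c_line_plus1 frag_extend_add)

lemma dP_c_line_Ebc:
  "dP (c_line Ebc i j k) = c_line Ec i (j + 1) k - c_line Ec i j k - gcell (i, j, k) Eb + gcell (i, j, 0) Eb"
  by (rule eq_of_same_increments[where L = "\<lambda>k. dP (c_line Ebc i j k)"])
     (simp_all add: c_line_plus1 frag_extend_add algebra_simps)

lemma dP_c_line_Eac:
  "dP (c_line Eac i j k) = c_line Ec (i + 1) j (k + j) - c_line Ec (i + 1) j j - c_line Ec i j k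
     - gcell (i, j, k) Ea + gcell (i, j, 0) Ea"
  by (rule eq_of_same_increments[where L = "\<lambda>k. dP (c_line Eac i j k)"])
     (simp_all only: c_line_plus1 c_line_plus1_shift frag_extend_add, simp_all add: algebra_simps)

lemma dP_c_line_Eabc:
  "dP (c_line Eabc i j k) = gcell (i, j, k) Eab - gcell (i, j, 0) Eab + c_line Eac i (j + 1) k
     - c_line Eac i j k - c_line Ebc (i + 1) j (k + j) + c_line Ebc (i + 1) j j + c_line Ebc i j k"
  by (rule eq_of_same_increments[where L = "\<lambda>k. dP (c_line Eabc i j k)"])
     (simp_all only: c_line_plus1 c_line_plus1_shift frag_extend_add, simp_all add: algebra_simps)

lemma dP_ab_sheet:
  "dP (ab_sheet i j) = gcell (i, j, 0) Ea - gcell (i, 0, 0) Ea - b_path (i + 1) j + b_path i j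
     - c_line Ec (i + 1) j j"
  by (rule eq_of_same_increments[where L = "\<lambda>j. dP (ab_sheet i j)"])
     (simp_all only: ab_sheet_plus1 b_path_plus1 c_line_plus1 frag_extend_add frag_extend_diff
        dP_c_line_Ebc, simp_all add: algebra_simps)

fun cell_contr :: "heis \<times> cell \<Rightarrow> (heis \<times> cell) \<Rightarrow>\<^sub>0 int" where
  "cell_contr ((i,j,k), E0) = a_path i + b_path i j + c_line Ec i j k"
| "cell_contr ((i,j,k), Ea) = ab_sheet i j - c_line Eac i j k"
| "cell_contr ((i,j,k), Eb) = - c_line Ebc i j k"
| "cell_contr ((i,j,k), Eab) = c_line Eabc i j k"
| "cell_contr (_, _) = 0"

abbreviation sP :: "((heis \<times> cell) \<Rightarrow>\<^sub>0 int) \<Rightarrow> (heis \<times> cell) \<Rightarrow>\<^sub>0 int" where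
  "sP \<equiv> frag_extend cell_contr"

definition augP :: "((heis \<times> cell) \<Rightarrow>\<^sub>0 int) \<Rightarrow> int" where
  "augP = frag_eval (\<lambda>x. if snd x = E0 then 1 else 0)"

lemma cell_contr_homotopy_basis:
  "dP (cell_contr x) + sP (cell_bd x) = frag_of x - (if snd x = E0 then gcell hunit E0 else 0)"
proof -
  obtain i j k S where x: "x = ((i, j, k), S)" by (metis prod_cases3 prod.collapse)
  show ?thesis unfolding x
    by (cases S; simp only: cell_contr.simps cell_bd.simps frag_extend_add frag_extend_diff
        frag_extend_minus frag_extend_of frag_extend_0 dP_a_path dP_b_path dP_c_line_Ec dP_c_line_Ebc
        dP_c_line_Eac dP_c_line_Eabc dP_ab_sheet a_path_plus1 b_path_plus1 c_line_plus1 ab_sheet_plus1;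
        simp add: algebra_simps hunit_def)
qed

lemma cell_contr_homotopy: "dP (sP y) + sP (dP y) = y - frag_cmul (augP y) (gcell hunit E0)"
proof -
  have "dP (sP y) + sP (dP y) = frag_extend (\<lambda>x. dP (cell_contr x) + sP (cell_bd x)) y"
    by (simp add: frag_extend_frag_extend frag_extend_add_fun)
  also have "\<dots> = frag_extend (\<lambda>x. frag_of x - frag_cmul (if snd x = E0 then 1 else 0) (gcell hunit E0)) y"
    by (rule frag_extend_eq) (simp add: cell_contr_homotopy_basis)
  also have "\<dots> = y - frag_cmul (augP y) (gcell hunit E0)"
    unfolding augP_def using subset_UNIV
    by (induction y rule: frag_induction)
       (auto simp: frag_extend_diff frag_cmul_diff_distrib algebra_simps)
  finally show ?thesis .
qed

lemma dP_sP_of_cycle: "dP y = 0 \<Longrightarrow> augP y = 0 \<Longrightarrow> dP (sP y) = y"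
  using cell_contr_homotopy[of y] by simp

lemma augP_cell_contr: "augP (cell_contr x) = 0"
proof -
  obtain i j k S where x: "x = ((i, j, k), S)" by (metis prod_cases3 prod.collapse)
  show ?thesis unfolding x augP_def
    by (cases S; simp add: a_path_def b_path_def c_line_def ab_sheet_def frag_eval_signed_sum)
qed

lemma augP_sP: "augP (sP y) = 0"
  unfolding augP_def by (simp add: frag_eval_frag_extend augP_cell_contr[unfolded augP_def])

lemma augP_actP: "augP (actP h y) = augP y"
  unfolding augP_def actP_def by (simp add: frag_eval_frag_extend)

lemma keys_cell_contr:
  "Poly_Mapping.keys (cell_contr (g, S)) \<subseteq> {x. cell_dim (snd x) = Suc (cell_dim S)}"
proof -
  obtain i j k where g: "g = (i, j, k)" by (metis prod_cases3)
  have line: "Poly_Mapping.keys (c_line T i' j' k') \<subseteq> {x. snd x = T}" for T i' j' k'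
    unfolding c_line_def by (rule keys_signed_sum) auto
  have "Poly_Mapping.keys (ab_sheet i j) \<subseteq> {x. snd x = Eab \<or> snd x = Ebc}"
    unfolding ab_sheet_def by (rule keys_signed_sum) (use line keys_diff in fastforce)
  moreover have "Poly_Mapping.keys (a_path i) \<subseteq> {x. snd x = Ea}"
    unfolding a_path_def by (rule keys_signed_sum) auto
  moreover have "Poly_Mapping.keys (b_path i j) \<subseteq> {x. snd x = Eb}"
    unfolding b_path_def by (rule keys_signed_sum) auto
  ultimately show ?thesis unfolding g
    using line keys_add keys_diff by (cases S; simp; fastforce)
qed

section \<open>The bar resolution\<close>

text \<open>A list \<open>g # xs\<close> stands for the element \<open>g[xs]\<close> of the bar resolution, so the group acts on
  heads, the boundary omits face 0 (which would delete the coefficient \<open>g\<close>), and deleting heads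
  passes to the inhomogeneous bar complex with trivial coefficients.\<close>

definition bar_bd :: "heis list \<Rightarrow> heis list \<Rightarrow>\<^sub>0 int" where
  "bar_bd ys = (if length ys \<le> 1 then 0 else
     (\<Sum>i\<in>{1..length ys}. frag_cmul ((-1) ^ (i - 1)) (frag_of (face hmul i ys))))"

abbreviation dB :: "(heis list \<Rightarrow>\<^sub>0 int) \<Rightarrow> heis list \<Rightarrow>\<^sub>0 int" where
  "dB \<equiv> frag_extend bar_bd"

definition bar_contr :: "heis list \<Rightarrow> heis list \<Rightarrow>\<^sub>0 int" where
  "bar_contr ys = frag_of (hunit # ys)"

abbreviation sB :: "(heis list \<Rightarrow>\<^sub>0 int) \<Rightarrow> heis list \<Rightarrow>\<^sub>0 int" where
  "sB \<equiv> frag_extend bar_contr"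

definition augB :: "(heis list \<Rightarrow>\<^sub>0 int) \<Rightarrow> int" where
  "augB = frag_eval (\<lambda>ys. if length ys = 1 then 1 else 0)"

definition act_head :: "heis \<Rightarrow> heis list \<Rightarrow> heis list" where
  "act_head h ys = (case ys of [] \<Rightarrow> [] | g # xs \<Rightarrow> hmul h g # xs)"

lemma act_head_simps [simp]: "act_head h [] = []" "act_head h (g # xs) = hmul h g # xs"
  by (simp_all add: act_head_def)

lemma act_head_act_head: "act_head h (act_head h' ys) = act_head (hmul h h') ys"
  by (cases ys) (simp_all add: hmul_assoc)

definition actB :: "heis \<Rightarrow> (heis list \<Rightarrow>\<^sub>0 int) \<Rightarrow> heis list \<Rightarrow>\<^sub>0 int" where
  "actB h = frag_extend (\<lambda>ys. frag_of (act_head h ys))"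

lemma actB_of [simp]: "actB h (frag_of ys) = frag_of (act_head h ys)"
  by (simp add: actB_def)
lemma actB_add [simp]: "actB h (x + y) = actB h x + actB h y"
  by (simp add: actB_def frag_extend_add)
lemma actB_diff [simp]: "actB h (x - y) = actB h x - actB h y"
  by (simp add: actB_def frag_extend_diff)
lemma actB_zero [simp]: "actB h 0 = 0"
  by (simp add: actB_def)
lemma actB_cmul [simp]: "actB h (frag_cmul c x) = frag_cmul c (actB h x)"
  by (simp add: actB_def frag_extend_cmul)
lemma actB_sum: "actB h (sum f I) = (\<Sum>i\<in>I. actB h (f i))"
  by (induction I rule: infinite_finite_induct) auto

lemma keys_actB: "Poly_Mapping.keys (actB h y) \<subseteq> act_head h ` Poly_Mapping.keys y"
  unfolding actB_def by (rule keys_frag_extend_subset) auto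

lemma length_act_head [simp]: "length (act_head h ys) = length ys"
  by (cases ys) auto

lemma actB_actB: "actB h (actB h' y) = actB (hmul h h') y"
  unfolding actB_def by (simp add: frag_extend_frag_extend act_head_act_head)

definition coinvB :: "(heis list \<Rightarrow>\<^sub>0 int) \<Rightarrow> heis list \<Rightarrow>\<^sub>0 int" where
  "coinvB = frag_extend (\<lambda>ys. frag_of (tl ys))"

lemma coinvB_actB: "coinvB (actB h y) = coinvB y"
proof -
  have "tl (act_head h ys) = tl ys" for ys by (cases ys) auto
  then show ?thesis unfolding coinvB_def actB_def by (simp add: frag_extend_frag_extend)
qed

definition triv_bd :: "heis list \<Rightarrow> heis list \<Rightarrow>\<^sub>0 int" where
  "triv_bd xs = (if xs = [] then 0 else
     (\<Sum>i\<in>{0..length xs}. frag_cmul ((-1) ^ i) (frag_of (face hmul i xs))))"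

abbreviation dT :: "(heis list \<Rightarrow>\<^sub>0 int) \<Rightarrow> heis list \<Rightarrow>\<^sub>0 int" where
  "dT \<equiv> frag_extend triv_bd"

lemma face_Suc_Cons:
  assumes "1 \<le> i" "i \<le> length xs" "xs \<noteq> []"
  shows "face m (Suc i) (x # xs) = x # face m i xs"
proof (cases "i = length xs")
  case True
  then show ?thesis using assms by (simp add: face_def butlast.simps split: list.splits)
next
  case False
  then have "i < length xs" using assms by simp
  then show ?thesis using assms
    by (cases i) (auto simp add: face_def nth_Cons' take_Cons' drop_Cons')
qed

lemma length_face: "i \<le> length xs \<Longrightarrow> xs \<noteq> [] \<Longrightarrow> length (face m i xs) = length xs - 1"
  by (auto simp add: face_def min_def)

lemma bar_bd_short: "length ys \<le> 1 \<Longrightarrow> bar_bd ys = 0"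
  by (simp add: bar_bd_def)

lemma bar_bd_Cons:
  assumes "xs \<noteq> []"
  shows "bar_bd (g # xs) = frag_of (hmul g (hd xs) # tl xs)
          + (\<Sum>i\<in>{1..length xs}. frag_cmul ((-1) ^ i) (frag_of (g # face hmul i xs)))"
proof -
  have "bar_bd (g # xs) =
      (\<Sum>i\<in>{1..Suc (length xs)}. frag_cmul ((-1) ^ (i - 1)) (frag_of (face hmul i (g # xs))))"
    using assms by (simp add: bar_bd_def)
  also have "\<dots> = frag_of (face hmul 1 (g # xs)) +
      (\<Sum>i\<in>{1..length xs}. frag_cmul ((-1) ^ i) (frag_of (face hmul (Suc i) (g # xs))))"
    by (simp add: sum.atLeast_Suc_atMost sum.shift_bounds_cl_Suc_ivl del: sum.cl_ivl_Suc)
  also have "(\<Sum>i\<in>{1..length xs}. frag_cmul ((-1) ^ i) (frag_of (face hmul (Suc i) (g # xs))))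
      = (\<Sum>i\<in>{1..length xs}. frag_cmul ((-1) ^ i) (frag_of (g # face hmul i xs)))"
    by (rule sum.cong) (auto simp: face_Suc_Cons assms)
  finally show ?thesis
    using assms by (cases xs) (simp_all add: face_def del: sum.cl_ivl_Suc)
qed

lemma bar_bd2: "bar_bd [g, x] = frag_of [hmul g x] - frag_of [g]"
  by (simp add: bar_bd_Cons face_def)

lemma bar_bd3: "bar_bd [g, x, y] = frag_of [hmul g x, y] - frag_of [g, hmul x y] + frag_of [g, x]"
  by (simp add: bar_bd_Cons face_def eval_nat_numeral)

lemma bar_bd4:
  "bar_bd [g, x, y, z] = frag_of [hmul g x, y, z] - frag_of [g, hmul x y, z] + frag_of [g, x, hmul y z]
     - frag_of [g, x, y]"
  by (simp add: bar_bd_Cons face_def eval_nat_numeral)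

lemma dB_bar_bd: "length ys \<le> 4 \<Longrightarrow> dB (bar_bd ys) = 0"
proof -
  assume "length ys \<le> 4"
  then consider "length ys \<le> 1" | "length ys = 2" | "length ys = 3" | "length ys = 4" by linarith
  then show ?thesis
  proof cases
    case 1
    then show ?thesis by (simp add: bar_bd_short)
  next
    case 2
    then obtain g x where "ys = [g, x]" by (rule length_2_cases)
    then show ?thesis by (simp add: bar_bd2 frag_extend_diff bar_bd_short)
  next
    case 3
    then obtain g x y where "ys = [g, x, y]" by (rule length_3_cases)
    then show ?thesis by (simp add: bar_bd3 bar_bd2 frag_extend_diff frag_extend_add hmul_assoc)
  next
    case 4
    then obtain g x y z where "ys = [g, x, y, z]" by (rule length_4_cases)
    then show ?thesis
      by (simp add: bar_bd4 bar_bd3 frag_extend_diff frag_extend_add hmul_assoc algebra_simps)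
  qed
qed

lemma keys_bar_bd: "Poly_Mapping.keys (bar_bd ys) \<subseteq> {zs. length zs = length ys - 1}"
proof (cases "length ys \<le> 1")
  case True
  then show ?thesis by (simp add: bar_bd_short)
next
  case False
  have "Poly_Mapping.keys (bar_bd ys) \<subseteq>
      (\<Union>i\<in>{1..length ys}. Poly_Mapping.keys (frag_cmul ((-1) ^ (i - 1)) (frag_of (face hmul i ys))))"
    using False unfolding bar_bd_def by (simp add: keys_sum)
  also have "\<dots> \<subseteq> {zs. length zs = length ys - 1}"
    using False length_face[of _ ys] by (cases ys) auto
  finally show ?thesis .
qed

lemma bar_bd_act_head: "bar_bd (act_head h ys) = actB h (bar_bd ys)"
proof (cases "length ys \<le> 1")
  case True
  then show ?thesis by (cases ys) (auto simp: bar_bd_short)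
next
  case False
  then obtain g xs where ys: "ys = g # xs" and xs: "xs \<noteq> []" by (cases ys) auto
  show ?thesis unfolding ys act_head_simps bar_bd_Cons[OF xs]
    by (simp add: actB_sum hmul_assoc)
qed

lemma dB_actB: "dB (actB h y) = actB h (dB y)"
  unfolding actB_def by (simp add: frag_extend_frag_extend bar_bd_act_head[unfolded actB_def])

lemma coinvB_bar_bd: "coinvB (bar_bd ys) = triv_bd (tl ys)"
proof (cases "length ys \<le> 1")
  case True
  then have "tl ys = []" by (cases ys) auto
  then show ?thesis using True by (simp add: bar_bd_short coinvB_def triv_bd_def)
next
  case False
  then obtain g xs where ys: "ys = g # xs" and xs: "xs \<noteq> []" by (cases ys) auto
  have "coinvB (bar_bd ys) =
      frag_of (tl xs) + (\<Sum>i\<in>{1..length xs}. frag_cmul ((-1) ^ i) (frag_of (face hmul i xs)))"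
    unfolding ys bar_bd_Cons[OF xs] coinvB_def
    by (simp add: frag_extend_add frag_extend_sum frag_extend_cmul o_def)
  also have "\<dots> = triv_bd (tl ys)"
    using xs by (simp add: triv_bd_def ys sum.atLeast_Suc_atMost face_def del: sum.cl_ivl_Suc)
  finally show ?thesis .
qed

lemma coinvB_dB: "coinvB (dB y) = dT (coinvB y)"
  unfolding coinvB_def by (simp add: frag_extend_frag_extend coinvB_bar_bd[unfolded coinvB_def])

lemma bar_contr_homotopy_basis:
  assumes "ys \<noteq> []"
  shows "dB (bar_contr ys) + sB (bar_bd ys) = frag_of ys - (if length ys = 1 then frag_of [hunit] else 0)"
proof -
  have d: "bar_bd (hunit # ys) =
      frag_of ys + (\<Sum>i\<in>{1..length ys}. frag_cmul ((-1) ^ i) (frag_of (hunit # face hmul i ys)))"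
    using assms by (simp add: bar_bd_Cons)
  show ?thesis
  proof (cases "length ys = 1")
    case True
    then obtain g where "ys = [g]" by (cases ys) auto
    then show ?thesis using d by (simp add: bar_contr_def bar_bd_short face_def)
  next
    case False
    then have "1 < length ys" using assms by (cases ys) auto
    then have "sB (bar_bd ys) =
        (\<Sum>i\<in>{1..length ys}. frag_cmul ((-1) ^ (i - 1)) (frag_of (hunit # face hmul i ys)))"
      by (simp add: bar_bd_def frag_extend_sum frag_extend_cmul o_def bar_contr_def)
    also have "\<dots> = - (\<Sum>i\<in>{1..length ys}. frag_cmul ((-1) ^ i) (frag_of (hunit # face hmul i ys)))"
      unfolding sum_negf[symmetric]
    proof (rule sum.cong)
      fix i assume "i \<in> {1..length ys}"
      then obtain j where "i = Suc j" by (cases i) auto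
      then show "frag_cmul ((-1) ^ (i - 1)) (frag_of (hunit # face hmul i ys)) =
          - frag_cmul ((-1) ^ i) (frag_of (hunit # face hmul i ys))"
        by (simp del: minus_frag_cmul add: frag_cmul_minus_one[symmetric])
    qed simp
    finally show ?thesis using d False by (simp add: bar_contr_def)
  qed
qed

lemma bar_contr_homotopy:
  assumes "Poly_Mapping.keys y \<subseteq> {ys. ys \<noteq> []}"
  shows "dB (sB y) + sB (dB y) = y - frag_cmul (augB y) (frag_of [hunit])"
  using assms unfolding augB_def
proof (induction y rule: frag_induction)
  case (one x)
  then show ?case using bar_contr_homotopy_basis[of x] by (simp add: frag_cmul_distrib)
qed (auto simp: frag_extend_diff frag_cmul_diff_distrib algebra_simps)

lemma augB_eq_0: "Poly_Mapping.keys y \<subseteq> {ys. 2 \<le> length ys} \<Longrightarrow> augB y = 0"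
  unfolding augB_def frag_eval_def by (rule sum.neutral) auto

lemma dB_sB_of_cycle:
  "Poly_Mapping.keys y \<subseteq> {ys. ys \<noteq> []} \<Longrightarrow> dB y = 0 \<Longrightarrow> augB y = 0 \<Longrightarrow> dB (sB y) = y"
  using bar_contr_homotopy[of y] by simp

lemma dB_sB_of_cycle_deg:
  assumes "Poly_Mapping.keys y \<subseteq> {ys. length ys = Suc (Suc n)}" and "dB y = 0"
  shows "dB (sB y) = y"
proof (rule dB_sB_of_cycle)
  show "Poly_Mapping.keys y \<subseteq> {ys. ys \<noteq> []}"
    using assms(1) by auto
  show "augB y = 0"
    using assms(1) by (intro augB_eq_0) auto
qed (rule assms(2))

definition homol :: "nat \<Rightarrow> (heis list \<Rightarrow>\<^sub>0 int) \<Rightarrow> (heis list \<Rightarrow>\<^sub>0 int) \<Rightarrow> bool" where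
  "homol n x y \<longleftrightarrow> (\<exists>u. Poly_Mapping.keys u \<subseteq> {xs. length xs = Suc n} \<and> x - y = dT u)"

lemma homolI: "Poly_Mapping.keys u \<subseteq> {xs. length xs = Suc n} \<Longrightarrow> x - y = dT u \<Longrightarrow> homol n x y"
  unfolding homol_def by blast

lemma homol_refl: "homol n x x"
  by (rule homolI[of 0]) simp_all

lemma homol_sym: "homol n x y \<Longrightarrow> homol n y x"
  unfolding homol_def
proof (elim exE conjE)
  fix u
  assume "Poly_Mapping.keys u \<subseteq> {xs. length xs = Suc n}" "x - y = dT u"
  then show "\<exists>u. Poly_Mapping.keys u \<subseteq> {xs. length xs = Suc n} \<and> y - x = dT u"
    by (intro exI[of _ "- u"]) (simp add: frag_extend_minus; metis minus_diff_eq)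
qed

lemma homol_add: "homol n x y \<Longrightarrow> homol n x' y' \<Longrightarrow> homol n (x + x') (y + y')"
  unfolding homol_def
proof (elim exE conjE)
  fix u v
  assume "Poly_Mapping.keys u \<subseteq> {xs. length xs = Suc n}" "x - y = dT u"
    "Poly_Mapping.keys v \<subseteq> {xs. length xs = Suc n}" "x' - y' = dT v"
  then show "\<exists>u. Poly_Mapping.keys u \<subseteq> {xs. length xs = Suc n} \<and> x + x' - (y + y') = dT u"
    by (intro exI[of _ "u + v"] conjI keys_add_subset) (simp_all add: frag_extend_add algebra_simps)
qed

lemma homol_trans: "homol n x y \<Longrightarrow> homol n y z \<Longrightarrow> homol n x z"
  using homol_add[of n x y y z] unfolding homol_def by (simp add: algebra_simps)

lemma homol_cmul: "homol n x y \<Longrightarrow> homol n (frag_cmul c x) (frag_cmul c y)"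
  unfolding homol_def
proof (elim exE conjE)
  fix u
  assume "Poly_Mapping.keys u \<subseteq> {xs. length xs = Suc n}" "x - y = dT u"
  then show "\<exists>u. Poly_Mapping.keys u \<subseteq> {xs. length xs = Suc n} \<and> frag_cmul c x - frag_cmul c y = dT u"
    by (intro exI[of _ "frag_cmul c u"] conjI keys_cmul_subset)
       (simp_all add: frag_extend_cmul frag_cmul_diff_right[symmetric])
qed

lemma frag_eval_triv_bd: "xs \<noteq> [] \<Longrightarrow> frag_eval \<phi> (triv_bd xs) = cobd hmul \<phi> xs"
  by (simp add: triv_bd_def cobd_def frag_eval_sum atMost_atLeast0)

lemma frag_eval_dT_cocycle:
  assumes "cocycle n \<phi>" and "Poly_Mapping.keys u \<subseteq> {xs. length xs = Suc n}"
  shows "frag_eval \<phi> (dT u) = 0"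
proof -
  have "frag_eval \<phi> (dT u) = frag_eval (\<lambda>k. frag_eval \<phi> (triv_bd k)) u"
    by (rule frag_eval_frag_extend)
  also have "\<dots> = frag_eval (\<lambda>k. 0) u"
  proof (rule frag_eval_cong)
    fix k
    assume "k \<in> Poly_Mapping.keys u"
    with assms(2) have "length k = Suc n" by auto
    with assms(1) show "frag_eval \<phi> (triv_bd k) = 0"
      by (subst frag_eval_triv_bd) (auto simp: cocycle_def)
  qed
  finally show ?thesis by simp
qed

lemma frag_eval_homol: "cocycle n \<phi> \<Longrightarrow> homol n x y \<Longrightarrow> frag_eval \<phi> x = frag_eval \<phi> y"
  unfolding homol_def using frag_eval_dT_cocycle by (metis eq_iff_diff_eq_0 frag_eval_diff)

section \<open>Comparison maps between the two resolutions\<close>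

text \<open>All three maps are defined on basis elements with head \<open>1\<close> by applying a contracting
  homotopy of the target to the image of the boundary, and extended equivariantly.\<close>

primrec to_cell :: "nat \<Rightarrow> heis list \<Rightarrow> (heis \<times> cell) \<Rightarrow>\<^sub>0 int" where
  "to_cell 0 ys = gcell (hd ys) E0"
| "to_cell (Suc n) ys = actP (hd ys) (sP (frag_extend (to_cell n) (bar_bd (hunit # tl ys))))"

lemma to_cell_hmul: "to_cell n (hmul h g # xs) = actP h (to_cell n (g # xs))"
  by (cases n) (simp_all add: actP_actP)

lemma frag_extend_to_cell_actB:
  "Poly_Mapping.keys y \<subseteq> {ys. ys \<noteq> []} \<Longrightarrow>
   frag_extend (to_cell n) (actB h y) = actP h (frag_extend (to_cell n) y)"
proof (induction y rule: frag_induction)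
  case (one x)
  then obtain g xs where "x = g # xs" by (cases x) auto
  then show ?case by (simp add: to_cell_hmul)
qed (auto simp: frag_extend_diff)

lemma keys_to_cell: "Poly_Mapping.keys (to_cell n ys) \<subseteq> {x. cell_dim (snd x) = n}"
proof (induction n arbitrary: ys)
  case 0
  then show ?case by simp
next
  case (Suc n)
  have "Poly_Mapping.keys (frag_extend (to_cell n) (bar_bd (hunit # tl ys))) \<subseteq> {x. cell_dim (snd x) = n}"
    by (rule keys_frag_extend_subset) (use Suc in auto)
  then have "Poly_Mapping.keys (sP (frag_extend (to_cell n) (bar_bd (hunit # tl ys))))
      \<subseteq> {x. cell_dim (snd x) = Suc n}"
    by (intro keys_frag_extend_subset) (use keys_cell_contr in fastforce)
  then show ?case
    using keys_actP by fastforce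
qed

lemma augP_to_cell_Suc: "augP (to_cell (Suc n) ys) = 0"
  by (simp add: augP_actP augP_sP)

lemma dP_to_cell:
  "n \<le> 2 \<Longrightarrow> length ys = n + 2 \<Longrightarrow> dP (to_cell (Suc n) ys) = frag_extend (to_cell n) (bar_bd ys)"
proof (induction n arbitrary: ys)
  case 0
  then have "length ys = 2" by simp
  then obtain g x where ys: "ys = [g, x]" by (rule length_2_cases)
  let ?Y = "frag_extend (to_cell 0) (bar_bd [hunit, x])"
  have Y: "?Y = gcell x E0 - gcell hunit E0"
    by (simp add: bar_bd2 frag_extend_diff)
  have "dP ?Y = 0" "augP ?Y = 0"
    unfolding Y by (simp_all add: frag_extend_diff augP_def)
  then have "dP (sP ?Y) = ?Y"
    by (rule dP_sP_of_cycle)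
  then have "dP (to_cell (Suc 0) ys) = actP g ?Y"
    by (simp only: to_cell.simps ys list.sel dP_actP)
  then show ?case by (simp add: Y ys bar_bd2 frag_extend_diff)
next
  case (Suc m)
  from Suc.prems obtain g xs where ys: "ys = g # xs" and lx: "length xs = m + 2"
    by (cases ys) auto
  let ?x0 = "hunit # xs"
  let ?Y = "frag_extend (to_cell (Suc m)) (bar_bd ?x0)"
  have kd: "Poly_Mapping.keys (bar_bd ?x0) \<subseteq> {zs. length zs = m + 2}"
    using keys_bar_bd[of ?x0] lx by auto
  have "dP ?Y = frag_extend (\<lambda>k. dP (to_cell (Suc m) k)) (bar_bd ?x0)"
    by (simp add: frag_extend_frag_extend)
  also have "\<dots> = frag_extend (\<lambda>k. frag_extend (to_cell m) (bar_bd k)) (bar_bd ?x0)"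
    by (rule frag_extend_eq) (use kd Suc.IH Suc.prems in auto)
  also have "\<dots> = frag_extend (to_cell m) (dB (bar_bd ?x0))"
    by (simp add: frag_extend_frag_extend)
  also have "\<dots> = 0"
    using dB_bar_bd[of ?x0] lx Suc.prems by simp
  finally have "dP ?Y = 0" .
  moreover have "augP ?Y = 0"
    unfolding augP_def by (simp add: frag_eval_frag_extend augP_to_cell_Suc[unfolded augP_def] del: to_cell.simps)
  ultimately have sY: "dP (sP ?Y) = ?Y"
    by (rule dP_sP_of_cycle)
  have ne: "Poly_Mapping.keys (bar_bd ?x0) \<subseteq> {ys. ys \<noteq> []}"
    using kd by auto
  have "dP (to_cell (Suc (Suc m)) ys) = actP g ?Y"
    by (simp only: to_cell.simps ys list.sel dP_actP sY)
  also have "\<dots> = frag_extend (to_cell (Suc m)) (actB g (bar_bd ?x0))"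
    by (simp add: frag_extend_to_cell_actB[OF ne])
  also have "actB g (bar_bd ?x0) = bar_bd ys"
    using bar_bd_act_head[of g ?x0] by (simp add: ys)
  finally show ?case .
qed

primrec to_bar_deg :: "nat \<Rightarrow> heis \<times> cell \<Rightarrow> heis list \<Rightarrow>\<^sub>0 int" where
  "to_bar_deg 0 x = frag_of [fst x]"
| "to_bar_deg (Suc n) x = actB (fst x) (sB (frag_extend (to_bar_deg n) (cell_bd (hunit, snd x))))"

definition to_bar :: "heis \<times> cell \<Rightarrow> heis list \<Rightarrow>\<^sub>0 int" where
  "to_bar x = to_bar_deg (cell_dim (snd x)) x"

lemma to_bar_deg_hmul: "to_bar_deg n (hmul h g, S) = actB h (to_bar_deg n (g, S))"
  by (cases n) (simp_all add: actB_actB)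

lemma to_bar_hmul: "to_bar (hmul h g, S) = actB h (to_bar (g, S))"
  by (simp add: to_bar_def to_bar_deg_hmul)

lemma frag_extend_to_bar_deg_actP:
  "frag_extend (to_bar_deg n) (actP h y) = actB h (frag_extend (to_bar_deg n) y)"
  using subset_UNIV by (induction y rule: frag_induction) (auto simp: frag_extend_diff to_bar_deg_hmul)

lemma frag_extend_to_bar_actP: "frag_extend to_bar (actP h y) = actB h (frag_extend to_bar y)"
  using subset_UNIV by (induction y rule: frag_induction) (auto simp: frag_extend_diff to_bar_hmul)

lemma keys_to_bar_deg: "Poly_Mapping.keys (to_bar_deg n x) \<subseteq> {ys. length ys = Suc n}"
proof (induction n arbitrary: x)
  case 0
  then show ?case by simp
next
  case (Suc n)
  have "Poly_Mapping.keys (frag_extend (to_bar_deg n) (cell_bd (hunit, snd x))) \<subseteq> {ys. length ys = Suc n}"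
    by (rule keys_frag_extend_subset) (use Suc in auto)
  then have "Poly_Mapping.keys (sB (frag_extend (to_bar_deg n) (cell_bd (hunit, snd x))))
      \<subseteq> {ys. length ys = Suc (Suc n)}"
    by (intro keys_frag_extend_subset) (auto simp: bar_contr_def)
  then show ?case
    using keys_actB by fastforce
qed

lemma dB_to_bar_deg:
  "cell_dim S = Suc n \<Longrightarrow> dB (to_bar_deg (Suc n) (h, S)) = frag_extend (to_bar_deg n) (cell_bd (h, S))"
proof (induction n arbitrary: h S)
  case 0
  let ?W = "frag_extend (to_bar_deg 0) (cell_bd (hunit, S))"
  have W: "?W = frag_of [if S = Ea then (1,0,0) else if S = Eb then (0,1,0) else (0,0,1)] - frag_of [hunit]"
    using 0 by (cases S) (auto simp: hunit_def frag_extend_diff)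
  have "Poly_Mapping.keys ?W \<subseteq> {ys. ys \<noteq> []}" "dB ?W = 0" "augB ?W = 0"
    unfolding W by (simp_all add: frag_extend_diff bar_bd_short augB_def keys_diff_subset)
  then have "dB (sB ?W) = ?W"
    by (rule dB_sB_of_cycle)
  then have "dB (to_bar_deg 1 (h, S)) = actB h ?W"
    by (simp only: to_bar_deg.simps One_nat_def fst_conv snd_conv dB_actB)
  also have "\<dots> = frag_extend (to_bar_deg 0) (actP h (cell_bd (hunit, S)))"
    by (simp add: frag_extend_to_bar_deg_actP)
  also have "actP h (cell_bd (hunit, S)) = cell_bd (h, S)"
    using cell_bd_hmul[of h hunit S] by simp
  finally show ?case by simp
next
  case (Suc m)
  let ?W = "frag_extend (to_bar_deg (Suc m)) (cell_bd (hunit, S))"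
  have kd: "Poly_Mapping.keys (cell_bd (hunit, S)) \<subseteq> {x. cell_dim (snd x) = Suc m}"
    using keys_cell_bd[of hunit S] Suc.prems by auto
  have "dB ?W = frag_extend (\<lambda>k. dB (to_bar_deg (Suc m) k)) (cell_bd (hunit, S))"
    by (simp add: frag_extend_frag_extend)
  also have "\<dots> = frag_extend (\<lambda>k. frag_extend (to_bar_deg m) (cell_bd k)) (cell_bd (hunit, S))"
    by (rule frag_extend_eq) (use kd Suc.IH in \<open>auto simp: split_paired_all\<close>)
  also have "\<dots> = frag_extend (to_bar_deg m) (dP (cell_bd (hunit, S)))"
    by (simp add: frag_extend_frag_extend)
  finally have "dB ?W = 0"
    by (simp add: dP_cell_bd)
  moreover have "Poly_Mapping.keys ?W \<subseteq> {ys. length ys = Suc (Suc m)}"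
    by (rule keys_frag_extend_subset) (use keys_to_bar_deg in blast)
  ultimately have "dB (sB ?W) = ?W"
    using dB_sB_of_cycle_deg by blast
  then have "dB (to_bar_deg (Suc (Suc m)) (h, S)) = actB h ?W"
    by (simp only: to_bar_deg.simps fst_conv snd_conv dB_actB)
  also have "\<dots> = frag_extend (to_bar_deg (Suc m)) (actP h (cell_bd (hunit, S)))"
    by (simp add: frag_extend_to_bar_deg_actP)
  also have "actP h (cell_bd (hunit, S)) = cell_bd (h, S)"
    using cell_bd_hmul[of h hunit S] by simp
  finally show ?case .
qed

lemma dB_to_bar: "dB (to_bar x) = frag_extend to_bar (cell_bd x)"
proof -
  obtain h S where x: "x = (h, S)" by (cases x)
  show ?thesis
  proof (cases "cell_dim S")
    case 0
    then have "S = E0" by (cases S) auto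
    then show ?thesis by (cases h) (simp add: x to_bar_def bar_bd_short)
  next
    case (Suc n)
    have "dB (to_bar x) = frag_extend (to_bar_deg n) (cell_bd (h, S))"
      using dB_to_bar_deg[OF Suc] by (simp add: x to_bar_def Suc)
    also have "\<dots> = frag_extend to_bar (cell_bd (h, S))"
      by (rule frag_extend_eq) (use keys_cell_bd[of h S] Suc in \<open>auto simp: to_bar_def\<close>)
    finally show ?thesis by (simp add: x)
  qed
qed

lemma dB_frag_extend_to_bar: "dB (frag_extend to_bar y) = frag_extend to_bar (dP y)"
  by (simp add: frag_extend_frag_extend dB_to_bar)

lemma keys_to_bar_to_cell:
  "Poly_Mapping.keys (frag_extend to_bar (to_cell n ys)) \<subseteq> {zs. length zs = Suc n}"
  by (rule keys_frag_extend_subset) (use keys_to_cell[of n ys] keys_to_bar_deg in \<open>force simp: to_bar_def\<close>)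

primrec bar_htpy :: "nat \<Rightarrow> heis list \<Rightarrow> heis list \<Rightarrow>\<^sub>0 int" where
  "bar_htpy 0 ys = 0"
| "bar_htpy (Suc n) ys = actB (hd ys) (sB (frag_of (hunit # tl ys)
     - frag_extend to_bar (to_cell (Suc n) (hunit # tl ys)) - frag_extend (bar_htpy n) (bar_bd (hunit # tl ys))))"

lemma bar_htpy_hmul: "bar_htpy n (hmul h g # xs) = actB h (bar_htpy n (g # xs))"
  by (cases n) (simp_all add: actB_actB)

lemma frag_extend_bar_htpy_actB:
  "Poly_Mapping.keys y \<subseteq> {ys. ys \<noteq> []} \<Longrightarrow>
   frag_extend (bar_htpy n) (actB h y) = actB h (frag_extend (bar_htpy n) y)"
proof (induction y rule: frag_induction)
  case (one x)
  then obtain g xs where "x = g # xs" by (cases x) auto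
  then show ?case by (simp add: bar_htpy_hmul del: bar_htpy.simps)
qed (auto simp: frag_extend_diff)

lemma keys_bar_htpy: "length ys = Suc n \<Longrightarrow> Poly_Mapping.keys (bar_htpy n ys) \<subseteq> {zs. length zs = n + 2}"
proof (induction n arbitrary: ys)
  case 0
  then show ?case by simp
next
  case (Suc n)
  let ?x0 = "hunit # tl ys"
  have l: "length ?x0 = Suc (Suc n)" using Suc.prems by (cases ys) auto
  have "Poly_Mapping.keys (frag_extend (bar_htpy n) (bar_bd ?x0)) \<subseteq> {zs. length zs = n + 2}"
    by (rule keys_frag_extend_subset) (use keys_bar_bd[of ?x0] l Suc.IH in auto)
  then have "Poly_Mapping.keys (frag_of ?x0 - frag_extend to_bar (to_cell (Suc n) ?x0)
      - frag_extend (bar_htpy n) (bar_bd ?x0)) \<subseteq> {zs. length zs = n + 2}"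
    using l keys_to_bar_to_cell[of "Suc n" ?x0] by (intro keys_diff_subset) auto
  then have "Poly_Mapping.keys (sB (frag_of ?x0 - frag_extend to_bar (to_cell (Suc n) ?x0)
      - frag_extend (bar_htpy n) (bar_bd ?x0))) \<subseteq> {zs. length zs = Suc n + 2}"
    by (intro keys_frag_extend_subset) (auto simp: bar_contr_def)
  then show ?case
    using keys_actB by (simp del: to_cell.simps) fastforce
qed

lemma dB_bar_htpy_argument:
  assumes IH: "\<And>ys. length ys = Suc n \<Longrightarrow> dB (bar_htpy n ys) + frag_extend (bar_htpy (n - 1)) (bar_bd ys)
      = frag_of ys - frag_extend to_bar (to_cell n ys)"
    and n: "n \<le> 2" and lx: "length xs = Suc n"
  shows "dB (frag_of (hunit # xs) - frag_extend to_bar (to_cell (Suc n) (hunit # xs))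
    - frag_extend (bar_htpy n) (bar_bd (hunit # xs))) = 0"
proof -
  let ?x0 = "hunit # xs"
  have kd: "Poly_Mapping.keys (bar_bd ?x0) \<subseteq> {zs. length zs = Suc n}"
    using keys_bar_bd[of ?x0] lx by auto
  have to_bar: "dB (frag_extend to_bar (to_cell (Suc n) ?x0))
      = frag_extend to_bar (frag_extend (to_cell n) (bar_bd ?x0))"
    using dP_to_cell[of n ?x0] n lx by (simp add: dB_frag_extend_to_bar del: to_cell.simps)
  have "dB (frag_extend (bar_htpy n) (bar_bd ?x0)) = frag_extend (\<lambda>k. dB (bar_htpy n k)) (bar_bd ?x0)"
    by (simp add: frag_extend_frag_extend)
  also have "\<dots> = frag_extend (\<lambda>k. frag_of k - frag_extend to_bar (to_cell n k)
      - frag_extend (bar_htpy (n - 1)) (bar_bd k)) (bar_bd ?x0)"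
    by (rule frag_extend_eq) (use kd IH in \<open>auto simp: algebra_simps\<close>)
  also have "\<dots> = bar_bd ?x0 - frag_extend to_bar (frag_extend (to_cell n) (bar_bd ?x0))
      - frag_extend (bar_htpy (n - 1)) (dB (bar_bd ?x0))"
    by (simp add: frag_extend_diff_fun frag_extend_frag_extend)
  also have "dB (bar_bd ?x0) = 0"
    using dB_bar_bd[of ?x0] n lx by simp
  finally have "dB (frag_extend (bar_htpy n) (bar_bd ?x0))
      = bar_bd ?x0 - frag_extend to_bar (frag_extend (to_cell n) (bar_bd ?x0))"
    by simp
  with to_bar show ?thesis
    by (simp add: frag_extend_diff)
qed

lemma bar_htpy_identity:
  "n \<le> 3 \<Longrightarrow> length ys = Suc n \<Longrightarrow>
   dB (bar_htpy n ys) + frag_extend (bar_htpy (n - 1)) (bar_bd ys) = frag_of ys - frag_extend to_bar (to_cell n ys)"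
proof (induction n arbitrary: ys)
  case 0
  then obtain g where "ys = [g]" by (cases ys) auto
  then show ?case by (simp add: bar_bd_short to_bar_def)
next
  case (Suc n)
  from Suc.prems obtain g xs where ys: "ys = g # xs" and lx: "length xs = Suc n"
    by (cases ys) auto
  let ?x0 = "hunit # xs"
  let ?Y = "frag_of ?x0 - frag_extend to_bar (to_cell (Suc n) ?x0) - frag_extend (bar_htpy n) (bar_bd ?x0)"
  have kd: "Poly_Mapping.keys (bar_bd ?x0) \<subseteq> {zs. length zs = Suc n}"
    using keys_bar_bd[of ?x0] lx by auto
  then have ne: "Poly_Mapping.keys (bar_bd ?x0) \<subseteq> {ys. ys \<noteq> []}"
    by auto
  have "Poly_Mapping.keys (frag_extend (bar_htpy n) (bar_bd ?x0)) \<subseteq> {zs. length zs = n + 2}"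
    by (rule keys_frag_extend_subset) (use kd keys_bar_htpy in auto)
  then have "Poly_Mapping.keys ?Y \<subseteq> {zs. length zs = Suc (Suc n)}"
    using lx keys_to_bar_to_cell[of "Suc n" ?x0] by (intro keys_diff_subset) auto
  moreover have "dB ?Y = 0"
    using Suc lx by (intro dB_bar_htpy_argument) auto
  ultimately have "dB (bar_htpy (Suc n) ys) = actB g ?Y"
    by (simp only: ys bar_htpy.simps list.sel dB_actB dB_sB_of_cycle_deg)
  moreover have "actB g (frag_extend to_bar (to_cell (Suc n) ?x0)) = frag_extend to_bar (to_cell (Suc n) ys)"
    using to_cell_hmul[of "Suc n" g hunit xs]
    by (simp add: ys frag_extend_to_bar_actP[symmetric] del: to_cell.simps)
  moreover have "actB g (frag_extend (bar_htpy n) (bar_bd ?x0)) = frag_extend (bar_htpy n) (bar_bd ys)"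
    using frag_extend_bar_htpy_actB[OF ne, of n g] bar_bd_act_head[of g ?x0] by (simp add: ys)
  ultimately show ?case
    by (simp add: ys del: to_cell.simps bar_htpy.simps)
qed

section \<open>Passing to coinvariants\<close>

definition lift_bar :: "(heis list \<Rightarrow>\<^sub>0 int) \<Rightarrow> heis list \<Rightarrow>\<^sub>0 int" where
  "lift_bar = frag_extend (\<lambda>xs. frag_of (hunit # xs))"

definition coinvP :: "((heis \<times> cell) \<Rightarrow>\<^sub>0 int) \<Rightarrow> cell \<Rightarrow>\<^sub>0 int" where
  "coinvP = frag_extend (\<lambda>x. frag_of (snd x))"

definition cell_bd0 :: "cell \<Rightarrow> cell \<Rightarrow>\<^sub>0 int" where
  "cell_bd0 S = coinvP (cell_bd (hunit, S))"

definition cell_rep :: "cell \<Rightarrow> heis list \<Rightarrow>\<^sub>0 int" where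
  "cell_rep S = coinvB (to_bar (hunit, S))"

definition cellular_part :: "nat \<Rightarrow> (heis list \<Rightarrow>\<^sub>0 int) \<Rightarrow> cell \<Rightarrow>\<^sub>0 int" where
  "cellular_part n z = coinvP (frag_extend (to_cell n) (lift_bar z))"

lemma coinvB_lift_bar: "coinvB (lift_bar z) = z"
  unfolding coinvB_def lift_bar_def by (simp add: frag_extend_frag_extend)

lemma keys_lift_bar:
  "Poly_Mapping.keys z \<subseteq> {xs. length xs = n} \<Longrightarrow> Poly_Mapping.keys (lift_bar z) \<subseteq> {ys. length ys = Suc n}"
  unfolding lift_bar_def by (rule keys_frag_extend_subset) auto

lemma coinvP_actP: "coinvP (actP h y) = coinvP y"
  unfolding coinvP_def actP_def by (simp add: frag_extend_frag_extend)

lemma coinvB_frag_extend_equivariant: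
  assumes "\<And>g xs. M (g # xs) = actB g (M (hunit # xs))"
    and "Poly_Mapping.keys w \<subseteq> {ys. ys \<noteq> []}"
  shows "coinvB (frag_extend M w) = frag_extend (\<lambda>xs. coinvB (M (hunit # xs))) (coinvB w)"
  using assms(2)
proof (induction w rule: frag_induction)
  case (one x)
  then obtain g xs where "x = g # xs" by (cases x) auto
  then show ?case using assms(1)[of g xs] coinvB_actB[of g "M (hunit # xs)"] by (simp add: coinvB_def)
qed (auto simp: frag_extend_diff coinvB_def)

lemma coinvP_frag_extend_equivariant:
  assumes "\<And>g xs. M (g # xs) = actP g (M (hunit # xs))"
    and "Poly_Mapping.keys w \<subseteq> {ys. ys \<noteq> []}"
  shows "coinvP (frag_extend M w) = frag_extend (\<lambda>xs. coinvP (M (hunit # xs))) (coinvB w)"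
  using assms(2)
proof (induction w rule: frag_induction)
  case (one x)
  then obtain g xs where "x = g # xs" by (cases x) auto
  then show ?case using assms(1)[of g xs] by (simp add: coinvP_actP coinvB_def)
qed (auto simp: frag_extend_diff coinvB_def coinvP_def)

lemma coinvB_frag_extend_to_bar: "coinvB (frag_extend to_bar y) = frag_extend cell_rep (coinvP y)"
proof -
  have "coinvB (to_bar x) = cell_rep (snd x)" for x
    using to_bar_hmul[of "fst x" hunit "snd x"] by (simp add: cell_rep_def coinvB_actB)
  then show ?thesis
    unfolding coinvB_def coinvP_def by (simp add: frag_extend_frag_extend cell_rep_def[unfolded coinvB_def])
qed

lemma coinvP_dP: "coinvP (dP y) = frag_extend cell_bd0 (coinvP y)"
proof -
  have "coinvP (cell_bd x) = cell_bd0 (snd x)" for x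
    using cell_bd_hmul[of "fst x" hunit "snd x"] by (simp add: cell_bd0_def coinvP_actP)
  then show ?thesis
    unfolding coinvP_def by (simp add: frag_extend_frag_extend cell_bd0_def[unfolded coinvP_def])
qed

lemma keys_coinvB:
  "Poly_Mapping.keys y \<subseteq> {ys. length ys = Suc n} \<Longrightarrow> Poly_Mapping.keys (coinvB y) \<subseteq> {xs. length xs = n}"
  unfolding coinvB_def by (rule keys_frag_extend_subset) auto

lemma keys_coinvP:
  "Poly_Mapping.keys y \<subseteq> {x. cell_dim (snd x) = n} \<Longrightarrow> Poly_Mapping.keys (coinvP y) \<subseteq> {S. cell_dim S = n}"
  unfolding coinvP_def by (rule keys_frag_extend_subset) auto

lemma keys_cellular_part: "Poly_Mapping.keys (cellular_part n z) \<subseteq> {S. cell_dim S = n}"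
  unfolding cellular_part_def by (intro keys_coinvP keys_frag_extend_subset) (use keys_to_cell in blast)

lemma keys_cell_rep: "Poly_Mapping.keys (cell_rep S) \<subseteq> {xs. length xs = cell_dim S}"
  unfolding cell_rep_def to_bar_def by (rule keys_coinvB) (use keys_to_bar_deg in auto)

lemma dT_cell_rep: "dT (cell_rep S) = frag_extend cell_rep (cell_bd0 S)"
proof -
  have "dT (cell_rep S) = coinvB (dB (to_bar (hunit, S)))"
    by (simp add: cell_rep_def coinvB_dB)
  also have "\<dots> = frag_extend cell_rep (cell_bd0 S)"
    by (simp add: dB_to_bar coinvB_frag_extend_to_bar cell_bd0_def)
  finally show ?thesis .
qed

lemma coinvB_dB_lift_bar: "dT z = 0 \<Longrightarrow> coinvB (dB (lift_bar z)) = 0"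
  by (simp add: coinvB_dB coinvB_lift_bar)

lemma keys_dB_lift_bar:
  assumes "1 \<le> n" and "Poly_Mapping.keys z \<subseteq> {xs. length xs = n}"
  shows "Poly_Mapping.keys (dB (lift_bar z)) \<subseteq> {ys. ys \<noteq> []}"
proof (rule keys_frag_extend_subset)
  fix k
  assume "k \<in> Poly_Mapping.keys (lift_bar z)"
  then have "length k = Suc n"
    using keys_lift_bar[OF assms(2)] by auto
  then show "Poly_Mapping.keys (bar_bd k) \<subseteq> {ys. ys \<noteq> []}"
    using keys_bar_bd[of k] assms(1) by fastforce
qed

text \<open>The bounding chain is the coinvariant part of \<^const>\<open>bar_htpy\<close> applied to the lift of
  the cycle.\<close>

lemma homol_cellular_part:
  assumes n: "1 \<le> n" "n \<le> 3" and kz: "Poly_Mapping.keys z \<subseteq> {xs. length xs = n}" and cz: "dT z = 0"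
  shows "homol n z (frag_extend cell_rep (cellular_part n z))"
proof (rule homolI)
  let ?x = "lift_bar z"
  have kx: "Poly_Mapping.keys ?x \<subseteq> {ys. length ys = Suc n}"
    using keys_lift_bar[OF kz] .
  have "dB (frag_extend (bar_htpy n) ?x) + frag_extend (bar_htpy (n - 1)) (dB ?x)
      = frag_extend (\<lambda>k. dB (bar_htpy n k) + frag_extend (bar_htpy (n - 1)) (bar_bd k)) ?x"
    by (simp add: frag_extend_frag_extend frag_extend_add_fun)
  also have "\<dots> = frag_extend (\<lambda>k. frag_of k - frag_extend to_bar (to_cell n k)) ?x"
    by (rule frag_extend_eq) (use kx bar_htpy_identity[of n] n in auto)
  also have "\<dots> = ?x - frag_extend to_bar (frag_extend (to_cell n) ?x)"
    by (simp add: frag_extend_diff_fun frag_extend_frag_extend)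
  finally have htpy: "dB (frag_extend (bar_htpy n) ?x) + frag_extend (bar_htpy (n - 1)) (dB ?x)
      = ?x - frag_extend to_bar (frag_extend (to_cell n) ?x)" .
  have "coinvB (frag_extend (bar_htpy (n - 1)) (dB ?x))
      = frag_extend (\<lambda>xs. coinvB (bar_htpy (n - 1) (hunit # xs))) (coinvB (dB ?x))"
    by (rule coinvB_frag_extend_equivariant[OF _ keys_dB_lift_bar[OF n(1) kz]])
       (metis bar_htpy_hmul hmul_hunit(2))
  also have "coinvB (dB ?x) = 0"
    using cz by (rule coinvB_dB_lift_bar)
  finally have "coinvB (frag_extend (bar_htpy (n - 1)) (dB ?x)) = 0" by simp
  moreover have "coinvB (dB (frag_extend (bar_htpy n) ?x)) = dT (coinvB (frag_extend (bar_htpy n) ?x))"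
    by (rule coinvB_dB)
  moreover have "coinvB (frag_extend to_bar (frag_extend (to_cell n) ?x))
      = frag_extend cell_rep (cellular_part n z)"
    by (simp add: coinvB_frag_extend_to_bar cellular_part_def)
  moreover have "coinvB (dB (frag_extend (bar_htpy n) ?x) + frag_extend (bar_htpy (n - 1)) (dB ?x))
      = coinvB (?x - frag_extend to_bar (frag_extend (to_cell n) ?x))"
    using htpy by simp
  ultimately show "z - frag_extend cell_rep (cellular_part n z) = dT (coinvB (frag_extend (bar_htpy n) ?x))"
    by (simp add: coinvB_def frag_extend_add frag_extend_diff coinvB_lift_bar[unfolded coinvB_def])
  show "Poly_Mapping.keys (coinvB (frag_extend (bar_htpy n) ?x)) \<subseteq> {xs. length xs = Suc n}"
    by (intro keys_coinvB keys_frag_extend_subset) (use kx keys_bar_htpy in auto)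
qed

lemma cell_bd0_cellular_part:
  assumes n: "1 \<le> n" "n \<le> 3" and kz: "Poly_Mapping.keys z \<subseteq> {xs. length xs = n}" and cz: "dT z = 0"
  shows "frag_extend cell_bd0 (cellular_part n z) = 0"
proof -
  let ?x = "lift_bar z"
  obtain m where m: "n = Suc m" "m \<le> 2" using n by (cases n) auto
  have "dP (frag_extend (to_cell n) ?x) = frag_extend (\<lambda>k. dP (to_cell n k)) ?x"
    by (simp add: frag_extend_frag_extend)
  also have "\<dots> = frag_extend (\<lambda>k. frag_extend (to_cell m) (bar_bd k)) ?x"
  proof (rule frag_extend_eq)
    fix k
    assume "k \<in> Poly_Mapping.keys ?x"
    then have "length k = m + 2" using keys_lift_bar[OF kz] m by auto
    then show "dP (to_cell n k) = frag_extend (to_cell m) (bar_bd k)"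
      using dP_to_cell[of m k] m by simp
  qed
  also have "\<dots> = frag_extend (to_cell m) (dB ?x)"
    by (simp add: frag_extend_frag_extend)
  finally have "frag_extend cell_bd0 (cellular_part n z) = coinvP (frag_extend (to_cell m) (dB ?x))"
    by (simp add: cellular_part_def coinvP_dP[symmetric])
  also have "\<dots> = frag_extend (\<lambda>xs. coinvP (to_cell m (hunit # xs))) (coinvB (dB ?x))"
    by (rule coinvP_frag_extend_equivariant[OF _ keys_dB_lift_bar[OF n(1) kz]])
       (metis to_cell_hmul hmul_hunit(2))
  also have "coinvB (dB ?x) = 0"
    using cz by (rule coinvB_dB_lift_bar)
  finally show ?thesis by simp
qed

section \<open>Homology\<close>

lemma triv_bd_singleton: "triv_bd [x] = 0"
  by (simp add: triv_bd_def face_def)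

lemma triv_bd_pair: "triv_bd [x, y] = frag_of [y] - frag_of [hmul x y] + frag_of [x]"
  by (simp add: triv_bd_def face_def eval_nat_numeral)

lemma triv_bd_triple:
  "triv_bd [x, y, z] = frag_of [y, z] - frag_of [hmul x y, z] + frag_of [x, hmul y z] - frag_of [x, y]"
  by (simp add: triv_bd_def face_def eval_nat_numeral)

lemma finite_cell_set [simp]: "finite (X :: cell set)"
proof (rule finite_subset[OF subset_UNIV])
  have cells: "UNIV = {E0, Ea, Eb, Ec, Eab, Eac, Ebc, Eabc}"
    using cell.exhaust by auto
  show "finite (UNIV :: cell set)"
    unfolding cells by simp
qed

lemma cell_dim_eq:
  "{S. cell_dim S = 1} = {Ea, Eb, Ec}" "{S. cell_dim S = 2} = {Eab, Eac, Ebc}" "{S. cell_dim S = 3} = {Eabc}"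
  by (auto elim: cell_dim.elims)

lemma homol_sum:
  "(\<And>i. i \<in> I \<Longrightarrow> homol n (f i) (g i)) \<Longrightarrow> homol n (\<Sum>i\<in>I. f i) (\<Sum>i\<in>I. g i)"
  by (induction I rule: infinite_finite_induct) (auto intro: homol_refl homol_add)

lemma homol_cellular_basis:
  assumes "\<And>S. cell_dim S = n \<Longrightarrow> homol n (cell_rep S) (r S)"
    and "1 \<le> n" "n \<le> 3" "Poly_Mapping.keys z \<subseteq> {xs. length xs = n}" "dT z = 0"
  shows "homol n z (\<Sum>S | cell_dim S = n. frag_cmul (Poly_Mapping.lookup (cellular_part n z) S) (r S))"
proof -
  have "frag_extend cell_rep (cellular_part n z)
      = (\<Sum>S | cell_dim S = n. frag_cmul (Poly_Mapping.lookup (cellular_part n z) S) (cell_rep S))"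
    by (rule frag_extend_finite_support[OF keys_cellular_part]) simp
  then have "homol n z (\<Sum>S | cell_dim S = n. frag_cmul (Poly_Mapping.lookup (cellular_part n z) S) (cell_rep S))"
    using homol_cellular_part[OF assms(2-5)] by simp
  moreover have "homol n (\<Sum>S | cell_dim S = n. frag_cmul (Poly_Mapping.lookup (cellular_part n z) S) (cell_rep S))
      (\<Sum>S | cell_dim S = n. frag_cmul (Poly_Mapping.lookup (cellular_part n z) S) (r S))"
    by (intro homol_sum homol_cmul) (use assms(1) in auto)
  ultimately show ?thesis by (rule homol_trans)
qed

lemma cell_bd0_simps: "cell_bd0 Eab = - frag_of Ec" "cell_bd0 Eac = 0" "cell_bd0 Ebc = 0"
  by (simp_all add: cell_bd0_def coinvP_def hunit_def frag_extend_add frag_extend_diff)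

lemma cell_rep_Ea: "cell_rep Ea = frag_of [ga] - frag_of [hunit]"
  by (simp add: cell_rep_def to_bar_def hunit_def coinvB_def bar_contr_def frag_extend_diff ga_def)

lemma cell_rep_Eb: "cell_rep Eb = frag_of [gb] - frag_of [hunit]"
  by (simp add: cell_rep_def to_bar_def hunit_def coinvB_def bar_contr_def frag_extend_diff gb_def)

definition B1_frag :: "heis list \<Rightarrow>\<^sub>0 int" where
  "B1_frag = frag_of [gc, ga] - frag_of [ga, gc]"

definition B2_frag :: "heis list \<Rightarrow>\<^sub>0 int" where
  "B2_frag = frag_of [gb, gc] - frag_of [gc, gb]"

definition C_frag :: "heis list \<Rightarrow>\<^sub>0 int" where
  "C_frag = frag_of [(0,0,-1), (0,1,1), (1,-1,-1)]
        + frag_of [(0,1,1), (1,-1,-1), (-1,1,-1)]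
        + frag_of [(1,-1,-1), (-1,1,-1), (1,0,1)]
        + frag_of [(-1,1,-1), (1,0,1), (0,0,-1)]
        - frag_of [(1,0,1), (-1,1,-1), (1,-1,-1)]
        - frag_of [(-1,1,-1), (1,-1,-1), (0,1,1)]"

lemma keys_B_frag: "Poly_Mapping.keys B1_frag \<subseteq> {xs. length xs = 2}" "Poly_Mapping.keys B2_frag \<subseteq> {xs. length xs = 2}"
  unfolding B1_frag_def B2_frag_def by (intro keys_diff_subset; simp)+

lemma keys_C_frag: "Poly_Mapping.keys C_frag \<subseteq> {xs. length xs = 3}"
  unfolding C_frag_def by (intro keys_diff_subset keys_add_subset; simp)

lemma dT_B_frag: "dT B1_frag = 0" "dT B2_frag = 0"
  by (simp_all add: B1_frag_def B2_frag_def triv_bd_pair frag_extend_diff ga_def gb_def gc_def)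

lemma dT_C_frag: "dT C_frag = 0"
  by (simp add: C_frag_def triv_bd_triple frag_extend_add frag_extend_diff algebra_simps)

lemma beta_B_frag:
  "frag_eval (beta 1) B1_frag = 1" "frag_eval (beta 2) B1_frag = 0"
  "frag_eval (beta 1) B2_frag = 0" "frag_eval (beta 2) B2_frag = 1"
  by (simp_all add: B1_frag_def B2_frag_def beta_def ga_def gb_def gc_def h1_def h2_def h3_def)

lemma gamma_C_frag: "frag_eval gamma C_frag = 1"
  by (simp add: C_frag_def gamma_def h1_def h2_def h3_def)

lemma homol_cell_rep_Ea: "homol 1 (cell_rep Ea) (frag_of [ga])"
  by (rule homolI[of "- frag_of [hunit, hunit]"]) (simp_all add: cell_rep_Ea frag_extend_minus triv_bd_pair)

lemma homol_cell_rep_Eb: "homol 1 (cell_rep Eb) (frag_of [gb])"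
  by (rule homolI[of "- frag_of [hunit, hunit]"]) (simp_all add: cell_rep_Eb frag_extend_minus triv_bd_pair)

lemma homol_cell_rep_Ec: "homol 1 (cell_rep Ec) 0"
proof (rule homolI[of "- cell_rep Eab"])
  show "Poly_Mapping.keys (- cell_rep Eab) \<subseteq> {xs. length xs = Suc 1}"
    using keys_cell_rep[of Eab] by (simp add: numeral_2_eq_2)
  show "cell_rep Ec - 0 = dT (- cell_rep Eab)"
    using dT_cell_rep[of Eab] by (simp add: cell_bd0_simps frag_extend_minus)
qed

lemma homol_cell_rep_Eac: "homol 2 (cell_rep Eac) (- B1_frag)"
  by (rule homolI[of "frag_of [ga, hunit, hunit] + frag_of [hunit, hunit, ga]
                      - frag_of [gc, hunit, hunit] - frag_of [hunit, hunit, gc]"])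
     (simp_all add: keys_diff_subset keys_add_subset cell_rep_def to_bar_def hunit_def coinvB_def
        bar_contr_def frag_extend_add frag_extend_diff ga_def gc_def B1_frag_def triv_bd_triple
        eval_nat_numeral algebra_simps)

lemma homol_cell_rep_Ebc: "homol 2 (cell_rep Ebc) B2_frag"
  by (rule homolI[of "frag_of [gb, hunit, hunit] + frag_of [hunit, hunit, gb]
                      - frag_of [gc, hunit, hunit] - frag_of [hunit, hunit, gc]"])
     (simp_all add: keys_diff_subset keys_add_subset cell_rep_def to_bar_def hunit_def coinvB_def
        bar_contr_def frag_extend_add frag_extend_diff gb_def gc_def B2_frag_def triv_bd_triple
        eval_nat_numeral algebra_simps)

lemma homol_deg1:
  assumes kz: "Poly_Mapping.keys z \<subseteq> {xs. length xs = 1}"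
  shows "homol 1 z (frag_cmul (frag_eval (alpha 1) z) (frag_of [ga])
                  + frag_cmul (frag_eval (alpha 2) z) (frag_of [gb]))"
proof -
  let ?c = "Poly_Mapping.lookup (cellular_part 1 z)"
  have "dT z = 0"
    by (rule frag_extend_eq_0) (use kz in \<open>auto simp: length_Suc_conv triv_bd_singleton\<close>)
  moreover have r: "homol 1 (cell_rep S) (case S of Ea \<Rightarrow> frag_of [ga] | Eb \<Rightarrow> frag_of [gb] | _ \<Rightarrow> 0)"
    if "cell_dim S = 1" for S
    using that homol_cell_rep_Ea homol_cell_rep_Eb homol_cell_rep_Ec by (cases S) simp_all
  ultimately have "homol 1 z (\<Sum>S | cell_dim S = 1.
      frag_cmul (?c S) (case S of Ea \<Rightarrow> frag_of [ga] | Eb \<Rightarrow> frag_of [gb] | _ \<Rightarrow> 0))"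
    using homol_cellular_basis[OF r _ _ kz] by simp
  then have h: "homol 1 z (frag_cmul (?c Ea) (frag_of [ga]) + frag_cmul (?c Eb) (frag_of [gb]))"
    unfolding cell_dim_eq by simp
  moreover have "frag_eval (alpha 1) z = ?c Ea" "frag_eval (alpha 2) z = ?c Eb"
    using frag_eval_homol[OF alpha_cocycle h] by (simp_all add: alpha_def ga_def gb_def h1_def h2_def)
  ultimately show ?thesis by simp
qed

lemma homol_deg2:
  assumes kz: "Poly_Mapping.keys z \<subseteq> {xs. length xs = 2}" and cz: "dT z = 0"
  shows "homol 2 z (frag_cmul (frag_eval (beta 1) z) B1_frag + frag_cmul (frag_eval (beta 2) z) B2_frag)"
proof -
  let ?c = "Poly_Mapping.lookup (cellular_part 2 z)"
  have r: "homol 2 (cell_rep S) (case S of Eac \<Rightarrow> - B1_frag | Ebc \<Rightarrow> B2_frag | _ \<Rightarrow> cell_rep S)" for S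
    using homol_cell_rep_Eac homol_cell_rep_Ebc homol_refl by (cases S) simp_all
  have "homol 2 z (\<Sum>S | cell_dim S = 2.
      frag_cmul (?c S) (case S of Eac \<Rightarrow> - B1_frag | Ebc \<Rightarrow> B2_frag | _ \<Rightarrow> cell_rep S))"
    by (rule homol_cellular_basis[OF r]) (simp_all add: kz cz)
  moreover have "?c Eab = 0"
  proof -
    have "frag_extend cell_bd0 (cellular_part 2 z) = frag_cmul (- ?c Eab) (frag_of Ec)"
      by (subst frag_extend_finite_support[OF keys_cellular_part])
         (simp_all add: cell_dim_eq cell_bd0_simps frag_cmul_minus_right)
    then show ?thesis
      using cell_bd0_cellular_part[of 2 z] kz cz by simp
  qed
  ultimately have h: "homol 2 z (frag_cmul (- ?c Eac) B1_frag + frag_cmul (?c Ebc) B2_frag)"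
    unfolding cell_dim_eq by (simp add: frag_cmul_minus_right)
  have "cocycle 2 (beta 1)" "cocycle 2 (beta 2)"
    by (simp_all add: beta_cocycle)
  then have "frag_eval (beta 1) z = - ?c Eac" "frag_eval (beta 2) z = ?c Ebc"
    using frag_eval_homol[OF _ h] beta_B_frag by simp_all
  with h show ?thesis by simp
qed

text \<open>Since \<^const>\<open>gamma\<close> takes the value 1 on \<^const>\<open>C_frag\<close>, the chain \<^const>\<open>C_frag\<close> is
  homologous to \<open>\<plusminus>\<close> the representative of \<open>Eabc\<close>, which generates.\<close>

lemma homol_deg3:
  assumes kz: "Poly_Mapping.keys z \<subseteq> {xs. length xs = 3}" and cz: "dT z = 0"
  shows "homol 3 z (frag_cmul (frag_eval gamma z) C_frag)"
proof -
  have multiple: "\<exists>c. homol 3 x (frag_cmul c (cell_rep Eabc))"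
    if "Poly_Mapping.keys x \<subseteq> {xs. length xs = 3}" "dT x = 0" for x
  proof
    have "homol 3 x (\<Sum>S | cell_dim S = 3. frag_cmul (Poly_Mapping.lookup (cellular_part 3 x) S) (cell_rep S))"
      by (rule homol_cellular_basis[OF homol_refl]) (simp_all add: that)
    then show "homol 3 x (frag_cmul (Poly_Mapping.lookup (cellular_part 3 x) Eabc) (cell_rep Eabc))"
      unfolding cell_dim_eq by simp
  qed
  obtain c where hz: "homol 3 z (frag_cmul c (cell_rep Eabc))"
    using multiple[OF kz cz] by blast
  obtain c' where hC: "homol 3 C_frag (frag_cmul c' (cell_rep Eabc))"
    using multiple[OF keys_C_frag dT_C_frag] by blast
  have "c' * frag_eval gamma (cell_rep Eabc) = 1"
    using frag_eval_homol[OF gamma_cocycle hC] gamma_C_frag by simp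
  then have c': "c' * c' = 1" "frag_eval gamma (cell_rep Eabc) = c'"
    by (auto simp: zmult_eq_1_iff)
  have "frag_eval gamma z = c * c'"
    using frag_eval_homol[OF gamma_cocycle hz] c' by simp
  moreover have "homol 3 (cell_rep Eabc) (frag_cmul c' C_frag)"
    using homol_cmul[OF hC, of c'] c' by (simp add: homol_sym)
  ultimately have "homol 3 (frag_cmul c (cell_rep Eabc)) (frag_cmul (frag_eval gamma z) C_frag)"
    using homol_cmul[of 3 "cell_rep Eabc" "frag_cmul c' C_frag" c] by simp
  with hz show ?thesis
    by (rule homol_trans)
qed

lemma bnd_lookup:
  assumes "[] \<notin> Poly_Mapping.keys x"
  shows "bnd hmul (Poly_Mapping.lookup x) ys = Poly_Mapping.lookup (dT x) ys"
proof -
  have "Poly_Mapping.lookup (dT x) ys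
      = (\<Sum>k\<in>Poly_Mapping.keys x. Poly_Mapping.lookup x k * Poly_Mapping.lookup (triv_bd k) ys)"
    by (simp add: frag_extend_def lookup_sum)
  also have "\<dots> = (\<Sum>k\<in>Poly_Mapping.keys x. \<Sum>i\<le>length k.
      if face hmul i k = ys then (-1) ^ i * Poly_Mapping.lookup x k else 0)"
  proof (rule sum.cong)
    fix k
    assume "k \<in> Poly_Mapping.keys x"
    with assms have "k \<noteq> []" by auto
    then show "Poly_Mapping.lookup x k * Poly_Mapping.lookup (triv_bd k) ys =
        (\<Sum>i\<le>length k. if face hmul i k = ys then (-1) ^ i * Poly_Mapping.lookup x k else 0)"
      by (simp add: triv_bd_def lookup_sum sum_distrib_left atMost_atLeast0 if_distrib mult.commute
          cong: if_cong) (rule sum.cong; auto)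
  qed simp
  also have "Poly_Mapping.keys x = {xs. Poly_Mapping.lookup x xs \<noteq> 0}"
    by (auto simp: in_keys_iff)
  finally show ?thesis unfolding bnd_def by simp
qed

lemma keys_Abs_poly_mapping_chain:
  "is_chain n z \<Longrightarrow> Poly_Mapping.keys (Abs_poly_mapping z) \<subseteq> {xs. length xs = n}"
  unfolding is_chain_def by (auto simp: in_keys_iff)

lemma dT_cycle: "cycle n z \<Longrightarrow> 1 \<le> n \<Longrightarrow> dT (Abs_poly_mapping z) = 0"
proof (rule poly_mapping_eqI)
  fix ys
  assume "cycle n z" "1 \<le> n"
  then have "is_chain n z" "\<forall>ys. bnd hmul z ys = 0" "[] \<notin> Poly_Mapping.keys (Abs_poly_mapping z)"
    using keys_Abs_poly_mapping_chain[of n z] unfolding cycle_def by auto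
  then show "Poly_Mapping.lookup (dT (Abs_poly_mapping z)) ys = Poly_Mapping.lookup 0 ys"
    using bnd_lookup[of "Abs_poly_mapping z" ys] by (simp add: is_chain_def)
qed

lemma is_chain_lookup: "Poly_Mapping.keys u \<subseteq> {xs. length xs = n} \<Longrightarrow> is_chain n (Poly_Mapping.lookup u)"
  unfolding is_chain_def by (auto simp: in_keys_iff[symmetric] subset_iff)

lemma cycle_lookupI:
  assumes "Poly_Mapping.keys x \<subseteq> {xs. length xs = n}" "1 \<le> n" "dT x = 0"
  shows "cycle n (Poly_Mapping.lookup x)"
  unfolding cycle_def
proof (intro conjI allI)
  show "is_chain n (Poly_Mapping.lookup x)"
    using assms(1) by (rule is_chain_lookup)
  fix ys
  have "[] \<notin> Poly_Mapping.keys x"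
    using assms(1,2) by auto
  then show "bnd hmul (Poly_Mapping.lookup x) ys = 0"
    using assms(3) by (simp add: bnd_lookup)
qed

lemma homologous_of_homol:
  assumes "homol n (Abs_poly_mapping z) W" and "finite {xs. z xs \<noteq> 0}"
    and "\<And>ys. Poly_Mapping.lookup W ys = w ys"
  shows "homologous n z w"
proof -
  obtain u where u: "Poly_Mapping.keys u \<subseteq> {xs. length xs = Suc n}" "Abs_poly_mapping z - W = dT u"
    using assms(1) unfolding homol_def by blast
  show ?thesis
    unfolding homologous_def
  proof (intro exI conjI allI)
    show "is_chain (Suc n) (Poly_Mapping.lookup u)"
      using u(1) by (rule is_chain_lookup)
    fix ys
    have "bnd hmul (Poly_Mapping.lookup u) ys = Poly_Mapping.lookup (dT u) ys"
      using u(1) by (intro bnd_lookup) auto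
    also have "\<dots> = z ys - w ys"
      using arg_cong[OF u(2), of "\<lambda>p. Poly_Mapping.lookup p ys"] assms(2,3) by (simp add: lookup_minus)
    finally show "z ys - w ys = bnd hmul (Poly_Mapping.lookup u) ys" by simp
  qed
qed

lemma gen_eq_lookup: "gen xs = Poly_Mapping.lookup (frag_of xs)"
  by (auto simp: gen_def)

lemma A_eq_lookup: "A i = Poly_Mapping.lookup (if i = 1 then frag_of [ga] else frag_of [gb])"
  by (simp add: A_def gen_eq_lookup)

lemma B_eq_lookup: "B i = Poly_Mapping.lookup (if i = 1 then B1_frag else B2_frag)"
  by (auto simp: B_def B1_frag_def B2_frag_def gen_eq_lookup lookup_minus)

lemma C_eq_lookup: "C = Poly_Mapping.lookup C_frag"
  by (auto simp: C_def C_frag_def gen_eq_lookup lookup_minus lookup_add)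

lemma cycle_A: "i \<in> {1, 2} \<Longrightarrow> cycle 1 (A i)"
  unfolding A_eq_lookup by (rule cycle_lookupI) (auto simp: triv_bd_singleton)

lemma homologous_A:
  assumes "cycle 1 z"
  shows "\<exists>m1 m2. homologous 1 z (\<lambda>ys. m1 * A 1 ys + m2 * A 2 ys)"
proof -
  have chain: "is_chain 1 z"
    using assms by (simp add: cycle_def)
  then have "finite {xs. z xs \<noteq> 0}"
    by (simp add: is_chain_def)
  with homol_deg1[OF keys_Abs_poly_mapping_chain[OF chain]] show ?thesis
    by (intro exI, rule homologous_of_homol) (simp_all add: A_eq_lookup lookup_add)
qed

lemma cycle_B: "i \<in> {1, 2} \<Longrightarrow> cycle 2 (B i)"
  unfolding B_eq_lookup by (rule cycle_lookupI) (use keys_B_frag dT_B_frag in auto)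

lemma homologous_B:
  assumes "cycle 2 z"
  shows "\<exists>m1 m2. homologous 2 z (\<lambda>ys. m1 * B 1 ys + m2 * B 2 ys)"
proof -
  have chain: "is_chain 2 z"
    using assms by (simp add: cycle_def)
  then have "finite {xs. z xs \<noteq> 0}"
    by (simp add: is_chain_def)
  with homol_deg2[OF keys_Abs_poly_mapping_chain[OF chain] dT_cycle[OF assms]] show ?thesis
    by (intro exI, rule homologous_of_homol) (simp_all add: B_eq_lookup lookup_add)
qed

lemma cycle_C: "cycle 3 C"
  unfolding C_eq_lookup by (rule cycle_lookupI) (use keys_C_frag dT_C_frag in auto)

lemma homologous_C:
  assumes "cycle 3 z"
  shows "\<exists>m. homologous 3 z (\<lambda>ys. m * C ys)"
proof -
  have chain: "is_chain 3 z"
    using assms by (simp add: cycle_def)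
  then have "finite {xs. z xs \<noteq> 0}"
    by (simp add: is_chain_def)
  with homol_deg3[OF keys_Abs_poly_mapping_chain[OF chain] dT_cycle[OF assms]] show ?thesis
    by (intro exI[of _ "frag_eval gamma (Abs_poly_mapping z)"], rule homologous_of_homol)
       (simp_all add: C_eq_lookup)
qed

section \<open>Cohomology\<close>

text \<open>The difference between a simplex and its expansion in the homology generators bounds a
  chain, chosen so that the generator cocycles of the next degree vanish on it; a cocycle
  evaluated on these chains is a cochain whose coboundary is that difference.\<close>

lemma cohomologous_alpha:
  assumes "cocycle 1 \<phi>"
  shows "cohomologous 1 \<phi> (\<lambda>xs. \<phi> [ga] * alpha 1 xs + \<phi> [gb] * alpha 2 xs)"
  unfolding cohomologous_def
proof (intro exI allI impI)
  fix xs :: "heis list"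
  assume "length xs = 1"
  then obtain x where xs: "xs = [x]" by (cases xs) auto
  have "homol 1 (frag_of [x]) (frag_cmul (alpha 1 [x]) (frag_of [ga]) + frag_cmul (alpha 2 [x]) (frag_of [gb]))"
    using homol_deg1[of "frag_of [x]"] by simp
  from frag_eval_homol[OF assms this] have "\<phi> [x] = alpha 1 [x] * \<phi> [ga] + alpha 2 [x] * \<phi> [gb]"
    by simp
  then show "\<phi> xs - (\<phi> [ga] * alpha 1 xs + \<phi> [gb] * alpha 2 xs) = cobd hmul (\<lambda>_. 0) xs"
    by (simp add: xs cobd_def)
qed

definition bounding1 :: "heis \<Rightarrow> heis list \<Rightarrow>\<^sub>0 int" where
  "bounding1 x = (SOME t. Poly_Mapping.keys t \<subseteq> {xs. length xs = 2}
     \<and> dT t = frag_of [x] - frag_cmul (alpha 1 [x]) (frag_of [ga]) - frag_cmul (alpha 2 [x]) (frag_of [gb])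
     \<and> frag_eval (beta 1) t = 0 \<and> frag_eval (beta 2) t = 0)"

lemma bounding1:
  "Poly_Mapping.keys (bounding1 x) \<subseteq> {xs. length xs = 2}"
  "dT (bounding1 x) = frag_of [x] - frag_cmul (alpha 1 [x]) (frag_of [ga]) - frag_cmul (alpha 2 [x]) (frag_of [gb])"
  "frag_eval (beta 1) (bounding1 x) = 0" "frag_eval (beta 2) (bounding1 x) = 0"
proof -
  have "homol 1 (frag_of [x]) (frag_cmul (alpha 1 [x]) (frag_of [ga]) + frag_cmul (alpha 2 [x]) (frag_of [gb]))"
    using homol_deg1[of "frag_of [x]"] by simp
  then obtain u where u: "Poly_Mapping.keys u \<subseteq> {xs. length xs = 2}"
    "frag_of [x] - (frag_cmul (alpha 1 [x]) (frag_of [ga]) + frag_cmul (alpha 2 [x]) (frag_of [gb])) = dT u"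
    unfolding homol_def by (auto simp: numeral_2_eq_2)
  let ?t = "u - frag_cmul (frag_eval (beta 1) u) B1_frag - frag_cmul (frag_eval (beta 2) u) B2_frag"
  have "Poly_Mapping.keys ?t \<subseteq> {xs. length xs = 2}"
    using keys_B_frag u(1) by (intro keys_diff_subset keys_cmul_subset)
  moreover have "dT ?t = dT u"
    by (simp add: frag_extend_diff frag_extend_cmul dT_B_frag)
  then have "dT ?t = frag_of [x] - frag_cmul (alpha 1 [x]) (frag_of [ga]) - frag_cmul (alpha 2 [x]) (frag_of [gb])"
    using u(2) by (simp add: algebra_simps)
  moreover have "frag_eval (beta 1) ?t = 0" "frag_eval (beta 2) ?t = 0"
    by (simp_all add: beta_B_frag del: One_nat_def)
  ultimately have "\<exists>t. Poly_Mapping.keys t \<subseteq> {xs. length xs = 2}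
     \<and> dT t = frag_of [x] - frag_cmul (alpha 1 [x]) (frag_of [ga]) - frag_cmul (alpha 2 [x]) (frag_of [gb])
     \<and> frag_eval (beta 1) t = 0 \<and> frag_eval (beta 2) t = 0"
    by blast
  from someI_ex[OF this] show
    "Poly_Mapping.keys (bounding1 x) \<subseteq> {xs. length xs = 2}"
    "dT (bounding1 x) = frag_of [x] - frag_cmul (alpha 1 [x]) (frag_of [ga]) - frag_cmul (alpha 2 [x]) (frag_of [gb])"
    "frag_eval (beta 1) (bounding1 x) = 0" "frag_eval (beta 2) (bounding1 x) = 0"
    unfolding bounding1_def by blast+
qed

definition defect2 :: "heis \<Rightarrow> heis \<Rightarrow> heis list \<Rightarrow>\<^sub>0 int" where
  "defect2 x y = frag_of [x, y] - frag_cmul (beta 1 [x, y]) B1_frag - frag_cmul (beta 2 [x, y]) B2_frag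
     - (bounding1 y - bounding1 (hmul x y) + bounding1 x)"

lemma keys_defect2: "Poly_Mapping.keys (defect2 x y) \<subseteq> {xs. length xs = 2}"
  unfolding defect2_def using keys_B_frag bounding1(1)
  by (intro keys_diff_subset keys_add_subset keys_cmul_subset) auto

lemma homol_defect2: "homol 2 (defect2 x y) 0"
proof -
  have "dT (defect2 x y) = 0"
    by (simp add: defect2_def frag_extend_diff frag_extend_add frag_extend_cmul dT_B_frag bounding1(2)
        triv_bd_pair alpha_def frag_cmul_distrib algebra_simps)
  then have "homol 2 (defect2 x y) (frag_cmul (frag_eval (beta 1) (defect2 x y)) B1_frag
      + frag_cmul (frag_eval (beta 2) (defect2 x y)) B2_frag)"
    by (rule homol_deg2[OF keys_defect2])
  moreover have "frag_eval (beta 1) (defect2 x y) = 0" "frag_eval (beta 2) (defect2 x y) = 0"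
    by (simp_all add: defect2_def beta_B_frag bounding1 del: One_nat_def)
  ultimately show ?thesis
    by (simp only: frag_cmul_zero add_0)
qed

lemma cohomologous_beta:
  assumes "cocycle 2 \<phi>"
  shows "cohomologous 2 \<phi> (\<lambda>xs. frag_eval \<phi> B1_frag * beta 1 xs + frag_eval \<phi> B2_frag * beta 2 xs)"
  unfolding cohomologous_def
proof (intro exI allI impI)
  fix xs :: "heis list"
  assume "length xs = 2"
  then obtain x y where xs: "xs = [x, y]" by (rule length_2_cases)
  have "frag_eval \<phi> (defect2 x y) = 0"
    using frag_eval_homol[OF assms homol_defect2] by simp
  then show "\<phi> xs - (frag_eval \<phi> B1_frag * beta 1 xs + frag_eval \<phi> B2_frag * beta 2 xs)
      = cobd hmul (\<lambda>ys. frag_eval \<phi> (bounding1 (hd ys))) xs"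
    by (simp add: xs cobd_pair defect2_def algebra_simps)
qed

definition bounding2 :: "heis \<Rightarrow> heis \<Rightarrow> heis list \<Rightarrow>\<^sub>0 int" where
  "bounding2 x y = (SOME t. Poly_Mapping.keys t \<subseteq> {xs. length xs = 3} \<and> dT t = defect2 x y
     \<and> frag_eval gamma t = 0)"

lemma bounding2:
  "Poly_Mapping.keys (bounding2 x y) \<subseteq> {xs. length xs = 3}" "dT (bounding2 x y) = defect2 x y"
  "frag_eval gamma (bounding2 x y) = 0"
proof -
  obtain u where u: "Poly_Mapping.keys u \<subseteq> {xs. length xs = 3}" "defect2 x y - 0 = dT u"
    using homol_defect2[of x y] unfolding homol_def by (auto simp: numeral_3_eq_3)
  let ?t = "u - frag_cmul (frag_eval gamma u) C_frag"
  have "Poly_Mapping.keys ?t \<subseteq> {xs. length xs = 3}"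
    using keys_C_frag u(1) by (intro keys_diff_subset keys_cmul_subset)
  moreover have "dT ?t = defect2 x y"
    using u(2) by (simp add: frag_extend_diff frag_extend_cmul dT_C_frag)
  moreover have "frag_eval gamma ?t = 0"
    by (simp add: gamma_C_frag)
  ultimately have "\<exists>t. Poly_Mapping.keys t \<subseteq> {xs. length xs = 3} \<and> dT t = defect2 x y
     \<and> frag_eval gamma t = 0"
    by blast
  from someI_ex[OF this] show
    "Poly_Mapping.keys (bounding2 x y) \<subseteq> {xs. length xs = 3}" "dT (bounding2 x y) = defect2 x y"
    "frag_eval gamma (bounding2 x y) = 0"
    unfolding bounding2_def by blast+
qed

definition defect3 :: "heis \<Rightarrow> heis \<Rightarrow> heis \<Rightarrow> heis list \<Rightarrow>\<^sub>0 int" where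
  "defect3 x y z = frag_of [x, y, z] - frag_cmul (gamma [x, y, z]) C_frag
     - (bounding2 y z - bounding2 (hmul x y) z + bounding2 x (hmul y z) - bounding2 x y)"

lemma homol_defect3: "homol 3 (defect3 x y z) 0"
proof -
  have keys: "Poly_Mapping.keys (defect3 x y z) \<subseteq> {xs. length xs = 3}"
    unfolding defect3_def using keys_C_frag bounding2(1)
    by (intro keys_diff_subset keys_add_subset keys_cmul_subset) auto
  have "cobd hmul (beta 1) [x, y, z] = 0" "cobd hmul (beta 2) [x, y, z] = 0"
    using beta_cocycle[of 1] beta_cocycle[of 2] by (auto simp: cocycle_def)
  moreover have "defect2 y z - defect2 (hmul x y) z + defect2 x (hmul y z) - defect2 x y
     = triv_bd [x, y, z] - frag_cmul (cobd hmul (beta 1) [x, y, z]) B1_frag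
       - frag_cmul (cobd hmul (beta 2) [x, y, z]) B2_frag"
    by (simp add: defect2_def triv_bd_triple cobd_triple hmul_assoc frag_cmul_distrib
        frag_cmul_diff_distrib algebra_simps)
  ultimately have "dT (defect3 x y z) = 0"
    unfolding defect3_def by (simp add: frag_extend_diff frag_extend_add frag_extend_cmul dT_C_frag bounding2)
  moreover have "frag_eval gamma (defect3 x y z) = 0"
    by (simp add: defect3_def gamma_C_frag bounding2)
  ultimately show ?thesis
    using homol_deg3[OF keys] by simp
qed

lemma cohomologous_gamma:
  assumes "cocycle 3 \<phi>"
  shows "cohomologous 3 \<phi> (\<lambda>xs. frag_eval \<phi> C_frag * gamma xs)"
  unfolding cohomologous_def
proof (intro exI allI impI)
  fix xs :: "heis list"
  assume "length xs = 3"
  then obtain x y z where xs: "xs = [x, y, z]" by (rule length_3_cases)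
  have "frag_eval \<phi> (defect3 x y z) = 0"
    using frag_eval_homol[OF assms homol_defect3] by simp
  then show "\<phi> xs - frag_eval \<phi> C_frag * gamma xs = cobd hmul (\<lambda>ys. frag_eval \<phi> (bounding2 (ys ! 0) (ys ! 1))) xs"
    by (simp add: xs cobd_triple defect3_def algebra_simps)
qed

lemma cup_alpha_alpha_cohomologous_0: "cohomologous 2 (cup 1 (alpha 1) (alpha 2)) (\<lambda>xs. 0)"
  unfolding cohomologous_def
proof (intro exI allI impI)
  fix xs :: "heis list"
  assume "length xs = 2"
  then obtain x y where xs: "xs = [x, y]" by (rule length_2_cases)
  show "cup 1 (alpha 1) (alpha 2) xs - 0 = cobd hmul (\<lambda>ys. h3 (ys ! 0) - h1 (ys ! 0) * h2 (ys ! 0)) xs"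
    by (simp add: xs cobd_pair cup_def alpha_def algebra_simps)
qed

lemma cup_beta_alpha_cohomologous:
  assumes "i \<in> {1, 2}" and "j \<in> {1, 2}"
  shows "cohomologous 3 (cup 2 (beta i) (alpha j)) (\<lambda>xs. (if i = j then 0 else 1) * gamma xs)"
proof -
  have eval_C: "frag_eval (cup 2 (beta i) (alpha j)) C_frag = (if i = j then 0 else 1)"
    using assms by (auto simp: C_frag_def cup_def beta_def alpha_def h1_def h2_def h3_def numeral_2_eq_2)
  have "cohomologous 3 (cup 2 (beta i) (alpha j)) (\<lambda>xs. frag_eval (cup 2 (beta i) (alpha j)) C_frag * gamma xs)"
    by (rule cohomologous_gamma[OF cocycle_cup_2_1[OF beta_cocycle[OF assms(1)] alpha_cocycle]])
  then show ?thesis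
    unfolding eval_C .
qed

theorem propositionA2:
  shows
  \<comment> \<open>(i) H^1\<close>
  "(\<forall>i\<in>{1,2}. cocycle 1 (alpha i)) \<and>
   (\<forall>\<phi>. cocycle 1 \<phi> \<longrightarrow> (\<exists>m1 m2. cohomologous 1 \<phi> (\<lambda>xs. m1 * alpha 1 xs + m2 * alpha 2 xs))) \<and>
   \<comment> \<open>(ii) H^2\<close>
   (\<forall>i\<in>{1,2}. cocycle 2 (beta i)) \<and>
   (\<forall>\<phi>. cocycle 2 \<phi> \<longrightarrow> (\<exists>m1 m2. cohomologous 2 \<phi> (\<lambda>xs. m1 * beta 1 xs + m2 * beta 2 xs))) \<and>
   \<comment> \<open>(iii) H^3\<close>
   cocycle 3 gamma \<and>
   (\<forall>\<phi>. cocycle 3 \<phi> \<longrightarrow> (\<exists>m. cohomologous 3 \<phi> (\<lambda>xs. m * gamma xs))) \<and>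
   \<comment> \<open>(iv) cup products\<close>
   cohomologous 2 (cup 1 (alpha 1) (alpha 2)) (\<lambda>xs. 0) \<and>
   (\<forall>i\<in>{1,2}. \<forall>j\<in>{1,2}.
      cohomologous 3 (cup 2 (beta i) (alpha j)) (\<lambda>xs. (if i = j then 0 else 1) * gamma xs)) \<and>
   \<comment> \<open>(v) homology\<close>
   (\<forall>i\<in>{1,2}. cycle 1 (A i)) \<and>
   (\<forall>z. cycle 1 z \<longrightarrow> (\<exists>m1 m2. homologous 1 z (\<lambda>ys. m1 * A 1 ys + m2 * A 2 ys))) \<and>
   (\<forall>i\<in>{1,2}. cycle 2 (B i)) \<and>
   (\<forall>z. cycle 2 z \<longrightarrow> (\<exists>m1 m2. homologous 2 z (\<lambda>ys. m1 * B 1 ys + m2 * B 2 ys))) \<and>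
   cycle 3 C \<and>
   (\<forall>z. cycle 3 z \<longrightarrow> (\<exists>m. homologous 3 z (\<lambda>ys. m * C ys)))"
proof -
  have "\<forall>\<phi>. cocycle 1 \<phi> \<longrightarrow> (\<exists>m1 m2. cohomologous 1 \<phi> (\<lambda>xs. m1 * alpha 1 xs + m2 * alpha 2 xs))"
    by (intro allI impI exI) (erule cohomologous_alpha)
  moreover have "\<forall>\<phi>. cocycle 2 \<phi> \<longrightarrow> (\<exists>m1 m2. cohomologous 2 \<phi> (\<lambda>xs. m1 * beta 1 xs + m2 * beta 2 xs))"
    by (intro allI impI exI) (erule cohomologous_beta)
  moreover have "\<forall>\<phi>. cocycle 3 \<phi> \<longrightarrow> (\<exists>m. cohomologous 3 \<phi> (\<lambda>xs. m * gamma xs))"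
    by (intro allI impI exI) (erule cohomologous_gamma)
  ultimately show ?thesis
    by (simp add: alpha_cocycle beta_cocycle gamma_cocycle cup_alpha_alpha_cohomologous_0
        cup_beta_alpha_cohomologous cycle_A homologous_A cycle_B homologous_B cycle_C homologous_C
        del: One_nat_def)
qed

end
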